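(* The numbers $u_n=b_{n,4}(\Delta_{n-1})$, $n\ge1$, are determined by the induction $u_1=1$ and $u_n=n\,u_{n-1}+n$ for $n\ge2$.
   Context: $B_n^+$ is the positive braid monoid with generators $\sigma_1,\dots,\sigma_{n-1}$ and relations $\sigma_i\sigma_j=\sigma_j\sigma_i$ ($|i-j|\ge2$), $\sigma_i\sigma_j\sigma_i=\sigma_j\sigma_i\sigma_j$ ($|i-j|=1$). $\Delta_1=1$, $\Delta_m=\sigma_1\cdots\sigma_{m-1}\Delta_{m-1}$. Simple $n$-braids are the left (equivalently right) divisors of $\Delta_n$ in $B_n^+$. For simple $x$, $D_L(x)$ (resp. $D_R(x)$) is the set of $i\in\{1,\dots,n-1\}$ with $\sigma_i$ a left (resp. right) divisor of $x$. A sequence $(x_1,\dots,x_d)$ of simple $n$-braids is normal if $x_k=\gcd(\Delta_n,x_k\cdots x_d)$ (greatest common left divisor) for each $k$; equivalently $D_R(x_k)\supseteq D_L(x_{k+1})$ for all $k<d$. For a simple $n$-braid $x$, $b_{n,d}(x)$ is the number of normal sequences $(x_1,\dots,x_{d-1},x)$ of simple $n$-braids. *)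

theory Defs
  imports Main
begin

text \<open>Positive braid words: a word is a list of generator indices, i stands for sigma_i.
  One-step application of a defining relation of the positive braid monoid inside a word.\<close>
inductive braid_step :: "nat list \<Rightarrow> nat list \<Rightarrow> bool" where
  comm: "(i::nat) \<ge> j + 2 \<or> j \<ge> i + 2 \<Longrightarrow> braid_step (u @ [i, j] @ v) (u @ [j, i] @ v)"
| braid: "(i::nat) = j + 1 \<or> j = i + 1 \<Longrightarrow> braid_step (u @ [i, j, i] @ v) (u @ [j, i, j] @ v)"

definition braid_eq :: "nat list \<Rightarrow> nat list \<Rightarrow> bool" where
  "braid_eq = equivclp braid_step"

definition words :: "nat \<Rightarrow> nat list set" where
  "words n = lists {1..<n}"

text \<open>The element of B_n^+ represented by a word: its equivalence class.\<close>
definition cls :: "nat \<Rightarrow> nat list \<Rightarrow> nat list set" where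
  "cls n w = {v \<in> words n. braid_eq v w}"

fun Delta :: "nat \<Rightarrow> nat list" where
  "Delta 0 = []"
| "Delta (Suc m) = [1..<Suc m] @ Delta m"

definition left_div :: "nat \<Rightarrow> nat list \<Rightarrow> nat list \<Rightarrow> bool" where
  "left_div n a b \<longleftrightarrow> (\<exists>c \<in> words n. braid_eq (a @ c) b)"

definition right_div :: "nat \<Rightarrow> nat list \<Rightarrow> nat list \<Rightarrow> bool" where
  "right_div n a b \<longleftrightarrow> (\<exists>c \<in> words n. braid_eq (c @ a) b)"

definition simples :: "nat \<Rightarrow> nat list set set" where
  "simples n = cls n ` {w \<in> words n. left_div n w (Delta n)}"

definition DL :: "nat \<Rightarrow> nat list set \<Rightarrow> nat set" where
  "DL n x = {i \<in> {1..<n}. \<exists>w \<in> x. left_div n [i] w}"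

definition DR :: "nat \<Rightarrow> nat list set \<Rightarrow> nat set" where
  "DR n x = {i \<in> {1..<n}. \<exists>w \<in> x. right_div n [i] w}"

text \<open>Normal sequences of simple n-braids (characterisation D_R(x_k) contains D_L(x_(k+1))).\<close>
definition normal_seq :: "nat \<Rightarrow> nat list set list \<Rightarrow> bool" where
  "normal_seq n xs \<longleftrightarrow> set xs \<subseteq> simples n \<and>
     (\<forall>k. Suc k < length xs \<longrightarrow> DL n (xs ! Suc k) \<subseteq> DR n (xs ! k))"

definition b :: "nat \<Rightarrow> nat \<Rightarrow> nat list set \<Rightarrow> nat" where
  "b n d x = card {xs. length xs = d \<and> normal_seq n xs \<and> last xs = x}"

end

theory Submission
  imports Defs "HOL-Combinatorics.Transposition" "HOL-Combinatorics.Multiset_Permutations"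
begin

text \<open>Matsumoto's theorem identifies simple \<open>n\<close>-braids with permutations of \<open>{1..n}\<close>, written
  in one-line notation, and turns \<open>D\<^sub>L\<close> and \<open>D\<^sub>R\<close> into the sets of left and right descents.
  In a normal sequence \<open>(w, p, q, \<Delta>\<^sub>n\<^sub>-\<^sub>1)\<close> the permutation \<open>q\<close> must then have a right
  descent everywhere except at \<open>n - 1\<close>, so \<open>q\<close> is \<open>{1..n} - {j}\<close> in decreasing order followed
  by \<open>j\<close>; likewise \<open>p\<close> is a set \<open>A\<close> with \<open>j - 1\<close> elements in decreasing order followed by its
  complement in decreasing order. Hence these sequences correspond to pairs \<open>(A, w)\<close> with
  \<open>A \<subset> {1..n}\<close> and \<open>w\<close> descending at each position \<open>k\<close> unless \<open>k \<in> A\<close> and \<open>k + 1 \<notin> A\<close>.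
  Replacing \<open>A\<close> by its indicator word, these are the marked arrangements of \<open>{1..n}\<close> but one.
  Splitting off the trailing block of \<open>False\<close>s, and then recursively the last block after the last
  exit \<open>True False\<close> of the mark, shows that there are \<open>\<Sum>a\<le>n. (n choose a) * (n - a)!\<close> marked
  arrangements; these numbers \<open>U\<^sub>n\<close> satisfy \<open>U\<^sub>n = n U\<^sub>n\<^sub>-\<^sub>1 + 1\<close>, so \<open>u\<^sub>n = U\<^sub>n - 1\<close>.\<close>

section \<open>The braid congruence on words\<close>

lemma equivclp_invariant:
  assumes "equivclp r x y" and "\<And>u v. r u v \<Longrightarrow> f u = f v"
  shows "f x = f y"
  using assms(1) by (induction rule: equivclp_induct) (auto dest: assms(2))

lemma equivclp_map:
  assumes "equivclp r x y" and "\<And>u v. r u v \<Longrightarrow> r (f u) (f v)"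
  shows "equivclp r (f x) (f y)"
  using assms(1) by (induction rule: equivclp_induct) (auto intro: equivclp_into_equivclp dest: assms(2))

lemma braid_eq_refl [simp]: "braid_eq u u"
  by (simp add: braid_eq_def)

lemma braid_eq_sym: "braid_eq u v \<Longrightarrow> braid_eq v u"
  by (simp add: braid_eq_def equivclp_sym)

lemma braid_eq_trans: "braid_eq u v \<Longrightarrow> braid_eq v w \<Longrightarrow> braid_eq u w"
  unfolding braid_eq_def by (rule equivclp_trans)

lemma braid_eq_invariant:
  assumes "braid_eq u v" and "\<And>u v. braid_step u v \<Longrightarrow> f u = f v"
  shows "f u = f v"
  using assms unfolding braid_eq_def by (rule equivclp_invariant)

lemma braid_step_length: "braid_step u v \<Longrightarrow> length u = length v"
  by (induction rule: braid_step.induct) auto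

lemma braid_eq_length: "braid_eq u v \<Longrightarrow> length u = length v"
  using braid_eq_invariant[where f = length] braid_step_length by blast

lemma braid_step_set: "braid_step u v \<Longrightarrow> set u = set v"
  by (induction rule: braid_step.induct) auto

lemma braid_eq_set: "braid_eq u v \<Longrightarrow> set u = set v"
  using braid_eq_invariant[where f = set] braid_step_set by blast

lemma braid_step_context: "braid_step u v \<Longrightarrow> braid_step (x @ u @ y) (x @ v @ y)"
proof (induction rule: braid_step.induct)
  case (comm i j u v)
  then show ?case using braid_step.comm[where i = i and j = j and u = "x @ u" and v = "v @ y"] by simp
next
  case (braid i j u v)
  then show ?case using braid_step.braid[where i = i and j = j and u = "x @ u" and v = "v @ y"] by simp
qed

lemma braid_eq_context: "braid_eq u v \<Longrightarrow> braid_eq (x @ u @ y) (x @ v @ y)"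
  unfolding braid_eq_def by (erule equivclp_map) (rule braid_step_context)

lemma braid_eq_Cons: "braid_eq u v \<Longrightarrow> braid_eq (a # u) (a # v)"
  using braid_eq_context[of u v "[a]" "[]"] by simp

lemma braid_eq_comm: "i \<ge> j + 2 \<or> j \<ge> i + 2 \<Longrightarrow> braid_eq (i # j # t) (j # i # t)"
  using braid_step.comm[of i j "[]" t] by (auto simp: braid_eq_def)

lemma braid_eq_braid: "i = j + 1 \<or> j = i + 1 \<Longrightarrow> braid_eq (i # j # i # t) (j # i # j # t)"
  using braid_step.braid[of i j "[]" t] by (auto simp: braid_eq_def)


section \<open>Relative order, adjacent swaps and decreasing lists\<close>

abbreviation adj_transpose :: "nat \<Rightarrow> nat \<Rightarrow> nat" where
  "adj_transpose a \<equiv> Transposition.transpose a (Suc a)"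

definition precedes :: "'a list \<Rightarrow> 'a \<Rightarrow> 'a \<Rightarrow> bool" where
  "precedes p x y \<longleftrightarrow> (\<exists>k l. k < l \<and> l < length p \<and> p ! k = x \<and> p ! l = y)"

lemma precedes_iff_index:
  assumes "distinct p" "i < length p" "j < length p" "p ! i = x" "p ! j = y"
  shows "precedes p x y \<longleftrightarrow> i < j"
proof
  assume "precedes p x y"
  then obtain k l where kl: "k < l" "l < length p" "p ! k = x" "p ! l = y"
    unfolding precedes_def by blast
  then have "k = i" "l = j" using assms by (metis nth_eq_iff_index_eq order.strict_trans)+
  then show "i < j" using kl by simp
next
  assume "i < j"
  then show "precedes p x y" using assms unfolding precedes_def by blast
qed

lemma precedes_map_inj:
  assumes "inj f"
  shows "precedes (map f p) (f x) (f y) \<longleftrightarrow> precedes p x y"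
proof -
  have "map f p ! k = f z \<longleftrightarrow> p ! k = z" if "k < length p" for k z
    using that assms by (simp add: inj_eq)
  then show ?thesis unfolding precedes_def by (metis length_map order.strict_trans)
qed

lemma precedes_map_transpose:
  "precedes (map (adj_transpose a) p) x y \<longleftrightarrow> precedes p (adj_transpose a x) (adj_transpose a y)"
  using precedes_map_inj[OF inj_transpose, of a "Suc a" p "adj_transpose a x" "adj_transpose a y"]
  by simp

lemma precedes_trans:
  assumes "distinct p" "precedes p x y" "precedes p y z"
  shows "precedes p x z"
  using assms unfolding precedes_def by (metis nth_eq_iff_index_eq order.strict_trans)

lemma not_precedes_iff:
  assumes "distinct p" "x \<in> set p" "y \<in> set p" "x \<noteq> y"
  shows "\<not> precedes p y x \<longleftrightarrow> precedes p x y"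
proof -
  obtain i j where "i < length p" "p ! i = x" "j < length p" "p ! j = y"
    using assms(2,3) by (auto simp: in_set_conv_nth)
  moreover from this have "i \<noteq> j" using assms(4) by blast
  ultimately show ?thesis using precedes_iff_index[OF assms(1)] by (metis linorder_neqE_nat not_less_iff_gr_or_eq)
qed

lemma precedes_append:
  "precedes (u @ v) a c \<longleftrightarrow> precedes u a c \<or> precedes v a c \<or> (a \<in> set u \<and> c \<in> set v)"
proof
  assume "precedes (u @ v) a c"
  then obtain i j where h: "i < j" "j < length u + length v" "(u @ v) ! i = a" "(u @ v) ! j = c"
    unfolding precedes_def by auto
  consider "j < length u" | "i < length u" "length u \<le> j" | "length u \<le> i" by linarith
  then show "precedes u a c \<or> precedes v a c \<or> (a \<in> set u \<and> c \<in> set v)"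
  proof cases
    case 1
    then have "precedes u a c" using h unfolding precedes_def by (auto simp: nth_append)
    then show ?thesis by simp
  next
    case 2
    then have "a \<in> set u" "c \<in> set v"
      using h nth_mem[of i u] nth_mem[of "j - length u" v] by (auto simp: nth_append)
    then show ?thesis by simp
  next
    case 3
    then have "precedes v a c" using h unfolding precedes_def
      by (intro exI[of _ "i - length u"] exI[of _ "j - length u"]) (auto simp: nth_append)
    then show ?thesis by simp
  qed
next
  assume "precedes u a c \<or> precedes v a c \<or> (a \<in> set u \<and> c \<in> set v)"
  then show "precedes (u @ v) a c"
  proof (elim disjE conjE)
    assume "precedes u a c"
    then obtain i j where "i < j" "j < length u" "u ! i = a" "u ! j = c" unfolding precedes_def by blast
    then show ?thesis unfolding precedes_def by (intro exI[of _ i] exI[of _ j]) (simp add: nth_append)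
  next
    assume "precedes v a c"
    then obtain i j where "i < j" "j < length v" "v ! i = a" "v ! j = c" unfolding precedes_def by blast
    then show ?thesis unfolding precedes_def
      by (intro exI[of _ "length u + i"] exI[of _ "length u + j"]) (simp add: nth_append)
  next
    assume "a \<in> set u" "c \<in> set v"
    then obtain i j where "i < length u" "u ! i = a" "j < length v" "v ! j = c" by (auto simp: in_set_conv_nth)
    then show ?thesis unfolding precedes_def
      by (intro exI[of _ i] exI[of _ "length u + j"]) (simp add: nth_append)
  qed
qed

lemma precedes_sorted_desc:
  "sorted_wrt (>) (u :: nat list) \<Longrightarrow> precedes u a c \<longleftrightarrow> a \<in> set u \<and> c \<in> set u \<and> c < a"
proof
  assume d: "sorted_wrt (>) u" and "precedes u a c"
  then obtain i j where h: "i < j" "j < length u" "u ! i = a" "u ! j = c" unfolding precedes_def by blast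
  have "u ! j < u ! i" using sorted_wrt_nth_less[OF d h(1,2)] .
  then show "a \<in> set u \<and> c \<in> set u \<and> c < a" using h by auto
next
  assume d: "sorted_wrt (>) u" and h: "a \<in> set u \<and> c \<in> set u \<and> c < a"
  then obtain i j where ij: "i < length u" "u ! i = a" "j < length u" "u ! j = c" by (auto simp: in_set_conv_nth)
  have "i < j"
  proof (rule ccontr)
    assume "\<not> i < j"
    then have "j < i \<or> j = i" by auto
    then show False
    proof
      assume "j < i"
      then have "u ! i < u ! j" using sorted_wrt_nth_less[OF d] ij by blast
      then show False using h ij by auto
    next
      assume "j = i" then show False using h ij by auto
    qed
  qed
  then show "precedes u a c" unfolding precedes_def using ij by blast
qed

definition swap_adj :: "nat \<Rightarrow> 'a list \<Rightarrow> 'a list" where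
  "swap_adj i p = p[i := p ! Suc i, Suc i := p ! i]"

lemma length_swap_adj [simp]: "length (swap_adj i p) = length p"
  by (simp add: swap_adj_def)

lemma nth_swap_adj: "Suc i < length p \<Longrightarrow> k < length p \<Longrightarrow> swap_adj i p ! k = p ! adj_transpose i k"
  by (auto simp: swap_adj_def transpose_def nth_list_update)

lemma swap_adj_swap_adj: "Suc i < length p \<Longrightarrow> swap_adj i (swap_adj i p) = p"
  by (rule nth_equalityI) (auto simp: nth_swap_adj transpose_def)

definition desc_list :: "nat set \<Rightarrow> nat list" where
  "desc_list U = rev (sorted_list_of_set U)"

lemma sorted_wrt_greater_nth: "sorted_wrt (>) w \<longleftrightarrow> (\<forall>i. Suc i < length w \<longrightarrow> w ! Suc i < (w ! i :: nat))"
  by (rule sorted_wrt_iff_nth_Suc_transp[OF transp_on_greater])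

lemma desc_list_props:
  assumes "finite U"
  shows "set (desc_list U) = U" "distinct (desc_list U)" "length (desc_list U) = card U"
    "sorted_wrt (>) (desc_list U)"
  using assms by (simp_all add: desc_list_def sorted_wrt_rev)

lemma desc_list_set: "sorted_wrt (>) w \<Longrightarrow> w = desc_list (set w)"
proof -
  assume "sorted_wrt (>) w"
  then have s: "sorted_wrt (<) (rev w)" by (simp add: sorted_wrt_rev)
  then have "distinct (rev w)" by (simp add: strict_sorted_iff)
  then have "sorted_list_of_set (set w) = rev w"
    using s sorted_list_of_set_unique[of "set w" "rev w"] by (simp add: distinct_card)
  then show "w = desc_list (set w)" by (simp add: desc_list_def)
qed

lemma desc_list_perm: "finite U \<Longrightarrow> desc_list U \<in> permutations_of_set U"
  by (simp add: desc_list_props permutations_of_set_def)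


section \<open>The permutation of a braid word and its inversions\<close>

fun word_perm :: "nat list \<Rightarrow> nat \<Rightarrow> nat" where
  "word_perm [] = id"
| "word_perm (a # w) = adj_transpose a \<circ> word_perm w"

lemma word_perm_append: "word_perm (u @ v) = word_perm u \<circ> word_perm v"
  by (induction u) auto

lemma braid_step_word_perm: "braid_step u v \<Longrightarrow> word_perm u = word_perm v"
proof (induction rule: braid_step.induct)
  case (comm i j u v)
  then have "adj_transpose i (adj_transpose j x) = adj_transpose j (adj_transpose i x)" for x
    by (auto simp: transpose_def)
  then show ?case by (simp add: word_perm_append fun_eq_iff)
next
  case (braid i j u v)
  then have "adj_transpose i (adj_transpose j (adj_transpose i x)) =
      adj_transpose j (adj_transpose i (adj_transpose j x))" for x
    by (auto simp: transpose_def)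
  then show ?case by (simp add: word_perm_append fun_eq_iff)
qed

lemma braid_eq_word_perm: "braid_eq u v \<Longrightarrow> word_perm u = word_perm v"
  using braid_eq_invariant[where f = word_perm] braid_step_word_perm by blast

text \<open>The one-line notation of the permutation of \<open>w\<close>; its entry at (0-based) position \<open>k\<close>
  is the image of \<open>k + 1\<close>.\<close>
definition perm_list :: "nat \<Rightarrow> nat list \<Rightarrow> nat list" where
  "perm_list n w = map (word_perm w) [1..<Suc n]"

lemma perm_list_Nil: "perm_list n [] = [1..<Suc n]"
  by (simp add: perm_list_def)

lemma perm_list_Cons: "perm_list n (a # w) = map (adj_transpose a) (perm_list n w)"
  by (simp add: perm_list_def)

lemma length_perm_list [simp]: "length (perm_list n w) = n"
  by (simp add: perm_list_def)

lemma nth_perm_list: "k < n \<Longrightarrow> perm_list n w ! k = word_perm w (Suc k)"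
  by (simp add: perm_list_def del: upt_Suc)

lemma braid_eq_perm_list: "braid_eq u v \<Longrightarrow> perm_list n u = perm_list n v"
  by (simp add: perm_list_def braid_eq_word_perm)

lemma words_Cons: "a # w \<in> words n \<longleftrightarrow> a \<in> {1..<n} \<and> w \<in> words n"
  by (simp add: words_def)

lemma words_append: "u @ v \<in> words n \<longleftrightarrow> u \<in> words n \<and> v \<in> words n"
  by (simp add: words_def)

lemma length_perm:
  "p \<in> permutations_of_set {1..n} \<Longrightarrow> length p = n"
  using length_finite_permutations_of_set by fastforce

lemma map_adj_transpose_perm:
  "p \<in> permutations_of_set {1..n} \<Longrightarrow> a \<in> {1..<n} \<Longrightarrow>
    map (adj_transpose a) p \<in> permutations_of_set {1..n}"
  by (auto simp: permutations_of_set_def distinct_map)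

lemma perm_list_perm: "w \<in> words n \<Longrightarrow> perm_list n w \<in> permutations_of_set {1..n}"
proof (induction w)
  case Nil
  then show ?case
    by (auto simp: perm_list_Nil permutations_of_set_def simp del: upt_Suc)
next
  case (Cons a w)
  then show ?case using map_adj_transpose_perm[of "perm_list n w" n a] by (simp add: perm_list_Cons words_Cons)
qed

lemma adjacent_mem_perm:
  "p \<in> permutations_of_set {1..n} \<Longrightarrow> a \<in> {1..<n} \<Longrightarrow> a \<in> set p \<and> Suc a \<in> set p"
  by (auto simp: permutations_of_set_def)

lemma swap_adj_perm:
  "p \<in> permutations_of_set {1..n} \<Longrightarrow> Suc i < n \<Longrightarrow> swap_adj i p \<in> permutations_of_set {1..n}"
  using length_perm[of p n] by (simp add: swap_adj_def permutations_of_set_def)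

lemma perm_list_snoc:
  assumes "a \<in> {1..<n}"
  shows "perm_list n (w @ [a]) = swap_adj (a - 1) (perm_list n w)"
proof (rule nth_equalityI)
  fix k assume "k < length (perm_list n (w @ [a]))"
  then have k: "k < n" by simp
  have "Suc (adj_transpose (a - 1) k) = adj_transpose a (Suc k)"
    using assms by (auto simp: transpose_def)
  moreover have "adj_transpose (a - 1) k < n"
    using assms k by (auto simp: transpose_def)
  ultimately show "perm_list n (w @ [a]) ! k = swap_adj (a - 1) (perm_list n w) ! k"
    using assms k by (simp add: nth_swap_adj nth_perm_list word_perm_append)
qed simp

definition inversions :: "nat list \<Rightarrow> (nat \<times> nat) set" where
  "inversions p = {(k, l). k < l \<and> l < length p \<and> p ! l < p ! k}"

definition inversion_count :: "nat list \<Rightarrow> nat" where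
  "inversion_count p = card (inversions p)"

lemma finite_inversions [simp]: "finite (inversions p)"
  by (rule finite_subset[of _ "{..<length p} \<times> {..<length p}"]) (auto simp: inversions_def)

lemma card_Suc_if_Diff_card_eq:
  assumes "finite A" "finite B" "card (A - {e}) = card (B - {e})" "e \<in> A" "e \<notin> B"
  shows "card A = Suc (card B)"
proof -
  have "B - {e} = B" using assms(5) by blast
  have "card A = Suc (card (A - {e}))" using card.remove[OF assms(1,4)] .
  also have "\<dots> = Suc (card B)" using assms(3) \<open>B - {e} = B\<close> by (simp only:)
  finally show ?thesis .
qed

lemma adj_transpose_less_iff:
  assumes "x \<noteq> y" "\<not> (x = a \<and> y = Suc a)" "\<not> (x = Suc a \<and> y = a)"
  shows "adj_transpose a x < adj_transpose a y \<longleftrightarrow> x < y"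
  using assms by (auto simp: transpose_def)

lemma inversions_map_transpose:
  assumes d: "distinct p" and ij: "i < length p" "p ! i = a" "j < length p" "p ! j = Suc a"
  shows "inversions (map (adj_transpose a) p) - {(i, j), (j, i)} = inversions p - {(i, j), (j, i)}"
proof -
  have "(k, l) \<in> inversions (map (adj_transpose a) p) \<longleftrightarrow> (k, l) \<in> inversions p"
    if kl: "(k, l) \<notin> {(i, j), (j, i)}" for k l
  proof (cases "k < l \<and> l < length p")
    case True
    have "m = i" if "m < length p" "p ! m = a" for m
      using that ij d by (metis nth_eq_iff_index_eq)
    moreover have "m = j" if "m < length p" "p ! m = Suc a" for m
      using that ij d by (metis nth_eq_iff_index_eq)
    ultimately have "\<not> (p ! l = a \<and> p ! k = Suc a)" "\<not> (p ! l = Suc a \<and> p ! k = a)"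
      using kl True by auto
    moreover have "p ! l \<noteq> p ! k" using True d by (simp add: nth_eq_iff_index_eq)
    ultimately show ?thesis using True by (simp add: inversions_def adj_transpose_less_iff)
  qed (auto simp: inversions_def)
  then show ?thesis by auto
qed

lemma inversion_count_map_transpose:
  assumes d: "distinct p" and a: "a \<in> set p" "Suc a \<in> set p"
  shows "precedes p (Suc a) a \<Longrightarrow> inversion_count p = Suc (inversion_count (map (adj_transpose a) p))"
    and "\<not> precedes p (Suc a) a \<Longrightarrow> inversion_count (map (adj_transpose a) p) = Suc (inversion_count p)"
proof -
  let ?q = "map (adj_transpose a) p"
  obtain i j where ij: "i < length p" "p ! i = a" "j < length p" "p ! j = Suc a"
    using a by (auto simp: in_set_conv_nth)
  note same = inversions_map_transpose[OF d ij]
  have q: "?q ! i = Suc a" "?q ! j = a" "i \<noteq> j" using ij by auto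
  have pr: "precedes p (Suc a) a \<longleftrightarrow> j < i" using precedes_iff_index[OF d] ij by blast
  show "precedes p (Suc a) a \<Longrightarrow> inversion_count p = Suc (inversion_count ?q)"
  proof -
    assume "precedes p (Suc a) a"
    then have "(j, i) \<in> inversions p" "(j, i) \<notin> inversions ?q"
        "(i, j) \<notin> inversions p" "(i, j) \<notin> inversions ?q"
      using pr ij q by (auto simp: inversions_def)
    moreover from this have "inversions ?q - {(j, i)} = inversions p - {(j, i)}" using same by blast
    ultimately show ?thesis unfolding inversion_count_def by (intro card_Suc_if_Diff_card_eq) auto
  qed
  show "\<not> precedes p (Suc a) a \<Longrightarrow> inversion_count ?q = Suc (inversion_count p)"
  proof -
    assume "\<not> precedes p (Suc a) a"
    then have "(i, j) \<in> inversions ?q" "(i, j) \<notin> inversions p"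
        "(j, i) \<notin> inversions p" "(j, i) \<notin> inversions ?q"
      using pr ij q by (auto simp: inversions_def)
    moreover from this have "inversions ?q - {(i, j)} = inversions p - {(i, j)}" using same by blast
    ultimately show ?thesis unfolding inversion_count_def by (intro card_Suc_if_Diff_card_eq) auto
  qed
qed

lemma inversions_swap_adj:
  assumes i: "Suc i < length p" and kl: "(k, l) \<in> inversions p" "(k, l) \<noteq> (i, Suc i)"
  shows "(adj_transpose i k, adj_transpose i l) \<in> inversions (swap_adj i p) - {(i, Suc i)}"
proof -
  have lt: "k < l" "l < length p" "p ! l < p ! k" using kl(1) by (auto simp: inversions_def)
  have "adj_transpose i k < adj_transpose i l" "(adj_transpose i k, adj_transpose i l) \<noteq> (i, Suc i)"
    using lt(1) kl(2) by (auto simp: transpose_def)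
  moreover have "adj_transpose i l < length p" using i lt(2) by (auto simp: transpose_def)
  moreover have "swap_adj i p ! adj_transpose i k = p ! k" "swap_adj i p ! adj_transpose i l = p ! l"
    using calculation lt by (simp_all add: nth_swap_adj i)
  ultimately show ?thesis using lt by (simp add: inversions_def)
qed

lemma inversion_count_swap_adj:
  assumes i: "Suc i < length p"
  shows "p ! Suc i < p ! i \<Longrightarrow> inversion_count p = Suc (inversion_count (swap_adj i p))"
    and "p ! i < p ! Suc i \<Longrightarrow> inversion_count (swap_adj i p) = Suc (inversion_count p)"
proof -
  let ?q = "swap_adj i p" and ?e = "(i, Suc i)"
  let ?g = "map_prod (adj_transpose i) (adj_transpose i)"
  have g_inv: "?g (?g x) = x" for x by (cases x) simp
  have "?g ` (inversions p - {?e}) = inversions ?q - {?e}"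
  proof
    show "?g ` (inversions p - {?e}) \<subseteq> inversions ?q - {?e}"
      using inversions_swap_adj[OF i] by auto
    show "inversions ?q - {?e} \<subseteq> ?g ` (inversions p - {?e})"
    proof
      fix x assume "x \<in> inversions ?q - {?e}"
      then have "?g x \<in> inversions (swap_adj i ?q) - {?e}"
        using inversions_swap_adj[of i ?q] i by (cases x) auto
      then have "?g x \<in> inversions p - {?e}" using swap_adj_swap_adj[OF i] by simp
      then show "x \<in> ?g ` (inversions p - {?e})" by (rule image_eqI[rotated]) (simp add: g_inv)
    qed
  qed
  moreover have "inj ?g" by (rule inj_on_inverseI[where g = ?g]) (rule g_inv)
  ultimately have same: "card (inversions ?q - {?e}) = card (inversions p - {?e})"
    by (metis card_image inj_on_subset subset_UNIV)
  have q: "?q ! i = p ! Suc i" "?q ! Suc i = p ! i" using i by (simp_all add: nth_swap_adj)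
  show "p ! Suc i < p ! i \<Longrightarrow> inversion_count p = Suc (inversion_count ?q)"
  proof -
    assume "p ! Suc i < p ! i"
    then have "?e \<in> inversions p" "?e \<notin> inversions ?q" using i q by (simp_all add: inversions_def)
    then show ?thesis using same unfolding inversion_count_def by (intro card_Suc_if_Diff_card_eq) auto
  qed
  show "p ! i < p ! Suc i \<Longrightarrow> inversion_count ?q = Suc (inversion_count p)"
  proof -
    assume "p ! i < p ! Suc i"
    then have "?e \<in> inversions ?q" "?e \<notin> inversions p" using i q by (simp_all add: inversions_def)
    then show ?thesis using same unfolding inversion_count_def by (intro card_Suc_if_Diff_card_eq) auto
  qed
qed


section \<open>Reduced words and Matsumoto's theorem\<close>

definition reduced :: "nat \<Rightarrow> nat list \<Rightarrow> bool" where
  "reduced n w \<longleftrightarrow> w \<in> words n \<and> inversion_count (perm_list n w) = length w"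

lemma inversion_count_upt: "inversion_count [1..<Suc n] = 0"
proof -
  have "inversions [1..<Suc n] = {}" by (auto simp: inversions_def simp del: upt_Suc)
  then show ?thesis by (simp add: inversion_count_def)
qed

lemma inversion_count_Cons:
  assumes "w \<in> words n" "a \<in> {1..<n}"
  shows "inversion_count (perm_list n (a # w)) =
    (if precedes (perm_list n w) (Suc a) a then inversion_count (perm_list n w) - 1
     else Suc (inversion_count (perm_list n w)))"
  using inversion_count_map_transpose[of "perm_list n w" a] perm_list_perm[OF assms(1)]
    adjacent_mem_perm[OF perm_list_perm[OF assms(1)] assms(2)]
  by (auto simp: perm_list_Cons permutations_of_set_def)

lemma inversion_count_le_length: "w \<in> words n \<Longrightarrow> inversion_count (perm_list n w) \<le> length w"
proof (induction w)
  case Nil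
  then show ?case using inversion_count_upt[of n] by (simp add: perm_list_Nil del: upt_Suc)
qed (auto simp: inversion_count_Cons words_Cons)

lemma precedes_perm_list_Cons:
  assumes "w \<in> words n" "a \<in> {1..<n}"
  shows "precedes (perm_list n (a # w)) (Suc a) a \<longleftrightarrow> \<not> precedes (perm_list n w) (Suc a) a"
  using not_precedes_iff[of "perm_list n w" a "Suc a"] perm_list_perm[OF assms(1)]
    adjacent_mem_perm[OF perm_list_perm[OF assms(1)] assms(2)]
  by (simp add: perm_list_Cons precedes_map_transpose permutations_of_set_def)

lemma reduced_Cons_iff:
  assumes "reduced n w" "a \<in> {1..<n}"
  shows "reduced n (a # w) \<longleftrightarrow> \<not> precedes (perm_list n w) (Suc a) a"
  using assms inversion_count_Cons[of w n a] by (auto simp: reduced_def words_Cons)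

lemma reduced_ConsD:
  assumes "reduced n (a # w)"
  shows "reduced n w" "a \<in> {1..<n}" "precedes (perm_list n (a # w)) (Suc a) a"
proof -
  have w: "w \<in> words n" and a: "a \<in> {1..<n}" using assms by (auto simp: reduced_def words_Cons)
  have "\<not> precedes (perm_list n w) (Suc a) a \<and> inversion_count (perm_list n w) = length w"
    using assms inversion_count_Cons[OF w a] inversion_count_le_length[OF w]
    by (auto simp: reduced_def split: if_splits)
  then show "reduced n w" "a \<in> {1..<n}" "precedes (perm_list n (a # w)) (Suc a) a"
    using w a precedes_perm_list_Cons[OF w a] by (auto simp: reduced_def)
qed

lemma braid_eq_reduced: "braid_eq v w \<Longrightarrow> reduced n v \<Longrightarrow> reduced n w"
  using braid_eq_length[of v w] braid_eq_perm_list[of v w n] braid_eq_set[of v w]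
  by (auto simp: reduced_def words_def)

lemma reduced_length_eq:
  "reduced n v \<Longrightarrow> reduced n w \<Longrightarrow> perm_list n v = perm_list n w \<Longrightarrow> length v = length w"
  by (metis reduced_def)

lemma reduced_snocD:
  assumes "reduced n (w @ [a])"
  shows "reduced n w" "perm_list n w ! (a - 1) < perm_list n w ! a"
proof -
  have a: "a \<in> {1..<n}" and w: "w \<in> words n"
    using assms by (auto simp: reduced_def words_append words_Cons)
  have d: "distinct (perm_list n w)" using perm_list_perm[OF w] by (simp add: permutations_of_set_def)
  have s: "Suc (a - 1) < length (perm_list n w)" and sa: "Suc (a - 1) = a" using a by auto
  have e: "inversion_count (swap_adj (a - 1) (perm_list n w)) = Suc (length w)"
    using assms a by (simp add: reduced_def perm_list_snoc)
  have "perm_list n w ! (a - 1) \<noteq> perm_list n w ! a"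
    using d s sa by (metis nth_eq_iff_index_eq n_not_Suc_n Suc_lessD)
  then show lt: "perm_list n w ! (a - 1) < perm_list n w ! a"
    using inversion_count_swap_adj(1)[OF s] e inversion_count_le_length[OF w] sa by fastforce
  then show "reduced n w"
    using inversion_count_swap_adj(2)[OF s] e w sa by (simp add: reduced_def)
qed

lemma perm_eq_upt_if_sorted:
  "p \<in> permutations_of_set {1..n} \<Longrightarrow> sorted p \<Longrightarrow> p = [1..<Suc n]"
  by (rule sorted_distinct_set_unique)
    (auto simp: permutations_of_set_def atLeastLessThanSuc_atLeastAtMost simp del: upt_Suc)

lemma perm_eq_rev_upt_if_descending:
  assumes p: "p \<in> permutations_of_set {1..n}" and desc: "\<forall>i. Suc i < n \<longrightarrow> p ! Suc i < p ! i"
  shows "p = rev [1..<Suc n]"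
proof -
  have "sorted_wrt (\<lambda>x y. y < x) p"
    using desc length_perm[OF p] by (subst sorted_wrt_iff_nth_Suc_transp) (auto simp: transp_def)
  then have "sorted_wrt (\<lambda>x y. y \<le> x) p" by (rule sorted_wrt_mono_rel[rotated]) auto
  then have "sorted (rev p)" by (simp add: sorted_wrt_rev)
  moreover have "rev p \<in> permutations_of_set {1..n}" using p by (simp add: permutations_of_set_def)
  ultimately show ?thesis by (metis perm_eq_upt_if_sorted rev_rev_ident)
qed

lemma exists_reduced: "p \<in> permutations_of_set {1..n} \<Longrightarrow> \<exists>w. reduced n w \<and> perm_list n w = p"
proof (induction "inversion_count p" arbitrary: p rule: less_induct)
  case less
  have len: "length p = n" using length_perm[OF less.prems] .
  show ?case
  proof (cases "\<exists>i. Suc i < n \<and> p ! Suc i < p ! i")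
    case True
    then obtain i where i: "Suc i < n" "p ! Suc i < p ! i" by blast
    let ?q = "swap_adj i p"
    have e: "inversion_count p = Suc (inversion_count ?q)"
      using inversion_count_swap_adj(1)[of i p] i len by simp
    obtain w where w: "reduced n w" "perm_list n w = ?q"
      using less.hyps[of ?q] e swap_adj_perm[OF less.prems i(1)] by auto
    have "perm_list n (w @ [Suc i]) = p"
      using perm_list_snoc[of "Suc i" n w] i w swap_adj_swap_adj[of i p] len by simp
    moreover have "reduced n (w @ [Suc i])"
      using w e calculation i by (auto simp: reduced_def words_append words_def)
    ultimately show ?thesis by blast
  next
    case False
    then have "\<forall>i. Suc i < length p \<longrightarrow> p ! i \<le> p ! Suc i" using len by (metis not_less)
    then have "sorted p" by (simp add: sorted_iff_nth_Suc)
    then have "p = [1..<Suc n]" by (rule perm_eq_upt_if_sorted[OF less.prems])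
    then show ?thesis using inversion_count_upt[of n]
      by (intro exI[of _ "[]"]) (simp add: reduced_def words_def perm_list_Nil del: upt_Suc)
  qed
qed

lemma exists_reduced_snoc:
  assumes p: "p \<in> permutations_of_set {1..n}" and a: "a \<in> {1..<n}" and desc: "p ! a < p ! (a - 1)"
  shows "\<exists>w. reduced n (w @ [a]) \<and> perm_list n (w @ [a]) = p"
proof -
  have len: "length p = n" using length_perm[OF p] .
  have s: "Suc (a - 1) < length p" and sa: "Suc (a - 1) = a" using a len by auto
  let ?q = "swap_adj (a - 1) p"
  have e: "inversion_count p = Suc (inversion_count ?q)"
    using inversion_count_swap_adj(1)[OF s] desc sa by simp
  obtain w where w: "reduced n w" "perm_list n w = ?q"
    using exists_reduced[OF swap_adj_perm[OF p]] s len by fastforce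
  have "perm_list n (w @ [a]) = p" using w perm_list_snoc[OF a] swap_adj_swap_adj[OF s] by simp
  moreover have "reduced n (w @ [a])"
    using w e calculation a by (auto simp: reduced_def words_append words_def)
  ultimately show ?thesis by blast
qed

lemma reduced_Cons_of_perm_list:
  assumes w: "reduced n w" and a: "a \<in> {1..<n}" and desc: "precedes p (Suc a) a"
    and pw: "perm_list n w = map (adj_transpose a) p"
  shows "reduced n (a # w)" "perm_list n (a # w) = p"
proof -
  show pa: "perm_list n (a # w) = p" using pw by (simp add: perm_list_Cons comp_def)
  have "\<not> precedes (perm_list n w) (Suc a) a"
    using precedes_perm_list_Cons[of w n a] w a desc pa by (simp add: reduced_def)
  then show "reduced n (a # w)" using reduced_Cons_iff[OF w a] by blast
qed

lemma exists_reduced_Cons: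
  assumes p: "p \<in> permutations_of_set {1..n}" and a: "a \<in> {1..<n}" and desc: "precedes p (Suc a) a"
  obtains w where "reduced n (a # w)" "perm_list n (a # w) = p"
proof -
  obtain w where "reduced n w" "perm_list n w = map (adj_transpose a) p"
    using exists_reduced[OF map_adj_transpose_perm[OF p a]] by blast
  then show ?thesis using reduced_Cons_of_perm_list[OF _ a desc] that by blast
qed

lemma precedes_map_transpose_far:
  assumes "a \<ge> c + 2 \<or> c \<ge> a + 2"
  shows "precedes (map (adj_transpose a) p) (Suc c) c \<longleftrightarrow> precedes p (Suc c) c"
proof -
  have "adj_transpose a c = c" "adj_transpose a (Suc c) = Suc c" using assms by auto
  then show ?thesis by (simp add: precedes_map_transpose)
qed

lemma precedes_map_transpose_adjacent:
  assumes d: "distinct p" and adj: "a = Suc c \<or> c = Suc a"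
    and pa: "precedes p (Suc a) a" and pc: "precedes p (Suc c) c"
  shows "precedes (map (adj_transpose a) p) (Suc c) c"
    and "precedes (map (adj_transpose c) (map (adj_transpose a) p)) (Suc a) a"
proof -
  consider "a = Suc c" | "c = Suc a" using adj by blast
  then have "precedes (map (adj_transpose a) p) (Suc c) c \<and>
      precedes (map (adj_transpose c) (map (adj_transpose a) p)) (Suc a) a"
  proof cases
    case 1
    then show ?thesis using pa pc precedes_trans[OF d, of "Suc a" a c]
      by (simp add: precedes_map_transpose del: map_map)
  next
    case 2
    then show ?thesis using pa pc precedes_trans[OF d, of "Suc c" c a]
      by (simp add: precedes_map_transpose del: map_map)
  qed
  then show "precedes (map (adj_transpose a) p) (Suc c) c"
    and "precedes (map (adj_transpose c) (map (adj_transpose a) p)) (Suc a) a" by auto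
qed

text \<open>The inductive step of Matsumoto's theorem: two left descents \<open>a \<noteq> c\<close> of a permutation can be
  completed to reduced words for it that differ only by the braid relation between \<open>a\<close> and \<open>c\<close>.\<close>
lemma reduced_words_from_two_left_descents:
  assumes p: "p \<in> permutations_of_set {1..n}" and a: "a \<in> {1..<n}" and c: "c \<in> {1..<n}"
    and "a \<noteq> c" and pa: "precedes p (Suc a) a" and pc: "precedes p (Suc c) c"
  obtains x y where "reduced n (a # x)" "perm_list n (a # x) = p" "braid_eq (a # x) (c # y)"
proof -
  have d: "distinct p" using p by (simp add: permutations_of_set_def)
  let ?q = "map (adj_transpose a) p"
  have q: "?q \<in> permutations_of_set {1..n}" using map_adj_transpose_perm[OF p a] .
  consider (far) "a \<ge> c + 2 \<or> c \<ge> a + 2" | (adjacent) "a = Suc c \<or> c = Suc a"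
    using \<open>a \<noteq> c\<close> by linarith
  then show ?thesis
  proof cases
    case far
    then have "precedes ?q (Suc c) c" using pc precedes_map_transpose_far by blast
    then obtain t where t: "reduced n (c # t)" "perm_list n (c # t) = ?q"
      using exists_reduced_Cons[OF q c] by blast
    show ?thesis
    proof (rule that)
      show "reduced n (a # c # t)" "perm_list n (a # c # t) = p"
        using reduced_Cons_of_perm_list[OF t(1) a pa t(2)] by auto
      show "braid_eq (a # c # t) (c # a # t)" using braid_eq_comm far by simp
    qed
  next
    case adjacent
    note desc = precedes_map_transpose_adjacent[OF d adjacent pa pc]
    obtain t where t: "reduced n (a # t)" "perm_list n (a # t) = map (adj_transpose c) ?q"
      using exists_reduced_Cons[OF map_adj_transpose_perm[OF q c] a desc(2)] by blast
    note c_a_t = reduced_Cons_of_perm_list[OF t(1) c desc(1) t(2)]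
    show ?thesis
    proof (rule that)
      show "reduced n (a # c # a # t)" "perm_list n (a # c # a # t) = p"
        using reduced_Cons_of_perm_list[OF c_a_t(1) a pa c_a_t(2)] by auto
      show "braid_eq (a # c # a # t) (c # a # c # t)" using braid_eq_braid adjacent by auto
    qed
  qed
qed

theorem matsumoto:
  "reduced n v \<Longrightarrow> reduced n w \<Longrightarrow> perm_list n v = perm_list n w \<Longrightarrow> braid_eq v w"
proof (induction "length v" arbitrary: v w rule: less_induct)
  case less
  have len: "length v = length w" using reduced_length_eq[OF less.prems] .
  have same_letter: "braid_eq (b # u) (b # x)"
    if "reduced n (b # u)" "reduced n (b # x)" "perm_list n (b # u) = perm_list n (b # x)"
      and "length u < length v" for b u x
  proof -
    have "perm_list n u = perm_list n x"
      using that(3) by (simp add: perm_list_Cons inj_transpose)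
    then show ?thesis
      using less.hyps[OF that(4)] reduced_ConsD(1)[OF that(1)] reduced_ConsD(1)[OF that(2)]
      by (blast intro: braid_eq_Cons)
  qed
  show ?case
  proof (cases v)
    case Nil
    then show ?thesis using len by simp
  next
    case (Cons a v')
    then obtain c w' where w: "w = c # w'" using len by (cases w) auto
    show ?thesis
    proof (cases "a = c")
      case True
      then show ?thesis using same_letter[of a v' w'] less.prems Cons w by simp
    next
      case False
      let ?p = "perm_list n v"
      have p: "?p \<in> permutations_of_set {1..n}"
        using less.prems(1) perm_list_perm by (simp add: reduced_def)
      note da = reduced_ConsD[OF less.prems(1)[unfolded Cons]]
      note dc = reduced_ConsD[OF less.prems(2)[unfolded w]]
      obtain x y where x: "reduced n (a # x)" "perm_list n (a # x) = ?p"
        and xy: "braid_eq (a # x) (c # y)"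
        using reduced_words_from_two_left_descents[OF p da(2) dc(2) False] da(3) dc(3) less.prems(3)
          Cons w by metis
      have y: "reduced n (c # y)" "perm_list n (c # y) = ?p"
        using braid_eq_reduced[OF xy x(1)] braid_eq_perm_list[OF xy] x(2) by auto
      have "length (c # y) = length v"
        using braid_eq_length[OF xy] reduced_length_eq[OF x(1) less.prems(1)] x(2) by simp
      then have "braid_eq (c # y) w"
        using same_letter[of c y w'] y less.prems(2,3) w by simp
      moreover have "braid_eq v (a # x)"
        using same_letter[of a v' x] x less.prems(1) Cons by simp
      ultimately show ?thesis using xy by (blast intro: braid_eq_trans)
    qed
  qed
qed


section \<open>The half twists\<close>

lemma word_perm_upt:
  "word_perm [1..<Suc m] k = (if 1 \<le> k \<and> k \<le> m then Suc k else if k = Suc m then 1 else k)"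
proof (induction m arbitrary: k)
  case (Suc m)
  have "[1..<Suc (Suc m)] = [1..<Suc m] @ [Suc m]" by simp
  then show ?case using Suc by (auto simp: word_perm_append transpose_def simp del: upt_Suc)
qed simp

lemma word_perm_Delta: "word_perm (Delta m) k = (if 1 \<le> k \<and> k \<le> m then Suc m - k else k)"
  by (induction m arbitrary: k) (auto simp: word_perm_append word_perm_upt[unfolded One_nat_def] simp del: upt_Suc)

lemma Delta_words: "m \<le> n \<Longrightarrow> Delta m \<in> words n"
  by (induction m) (auto simp: words_def)

lemma length_Delta: "length (Delta m) = card {(k, l). k < l \<and> l < m}"
proof (induction m)
  case (Suc m)
  have e: "{(k, l). k < l \<and> l < Suc m} = {(k, l). k < l \<and> l < m} \<union> ({..<m} \<times> {m})" by auto
  have "finite {(k, l). k < l \<and> l < m}"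
    by (rule finite_subset[of _ "{..<m} \<times> {..<m}"]) auto
  then have "card {(k, l). k < l \<and> l < Suc m} = card {(k, l). k < l \<and> l < m} + card ({..<m} \<times> {m})"
    unfolding e by (intro card_Un_disjoint) auto
  then show ?case using Suc by simp
qed simp

lemma nth_perm_list_Delta:
  "m \<le> n \<Longrightarrow> k < n \<Longrightarrow> perm_list n (Delta m) ! k = (if k < m then m - k else Suc k)"
  by (simp add: nth_perm_list word_perm_Delta)

lemma reduced_Delta: "m \<le> n \<Longrightarrow> reduced n (Delta m)"
proof -
  assume m: "m \<le> n"
  have "inversions (perm_list n (Delta m)) = {(k, l). k < l \<and> l < m}"
    using m by (auto simp: inversions_def nth_perm_list_Delta split: if_splits)
  then show ?thesis using m by (simp add: reduced_def Delta_words inversion_count_def length_Delta)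
qed

lemma perm_list_Delta: "perm_list n (Delta n) = rev [1..<Suc n]"
  by (rule nth_equalityI) (auto simp: nth_perm_list_Delta rev_nth nth_upt simp del: upt_Suc)

lemma inversion_count_le_length_Delta:
  assumes "p \<in> permutations_of_set {1..n}"
  shows "inversion_count p \<le> length (Delta n)"
proof -
  have "inversions p \<subseteq> {(k, l). k < l \<and> l < n}" using length_perm[OF assms] by (auto simp: inversions_def)
  moreover have "finite {(k, l). k < l \<and> l < n}"
    by (rule finite_subset[of _ "{..<n} \<times> {..<n}"]) auto
  ultimately have "card (inversions p) \<le> card {(k, l). k < l \<and> l < n}" by (rule card_mono[rotated])
  then show ?thesis by (simp add: inversion_count_def length_Delta)
qed


section \<open>Simple braids as permutations\<close>

lemma inversion_count_append_le:
  "w @ c \<in> words n \<Longrightarrow> inversion_count (perm_list n (w @ c)) \<le> inversion_count (perm_list n w) + length c"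
proof (induction c rule: rev_induct)
  case (snoc a c)
  then have a: "a \<in> {1..<n}" and wc: "w @ c \<in> words n" by (auto simp: words_def)
  let ?p = "perm_list n (w @ c)"
  have s: "Suc (a - 1) < length ?p" using a by simp
  have "distinct ?p" using perm_list_perm[OF wc] by (simp add: permutations_of_set_def)
  then have "?p ! (a - 1) \<noteq> ?p ! Suc (a - 1)" using s by (simp add: nth_eq_iff_index_eq)
  then have "inversion_count (swap_adj (a - 1) ?p) \<le> Suc (inversion_count ?p)"
    using inversion_count_swap_adj[OF s] by (cases "?p ! (a - 1) < ?p ! Suc (a - 1)") auto
  then show ?case using snoc(1)[OF wc] perm_list_snoc[OF a, of "w @ c"] by simp
qed simp

lemma reduced_prefix: "reduced n (w @ c) \<Longrightarrow> reduced n w"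
  using inversion_count_append_le[of w c n] inversion_count_le_length[of w n]
  by (auto simp: reduced_def words_append)

lemma reduced_extends_to_Delta:
  "reduced n w \<Longrightarrow> \<exists>c. reduced n (w @ c) \<and> perm_list n (w @ c) = perm_list n (Delta n)"
proof (induction "length (Delta n) - length w" arbitrary: w rule: less_induct)
  case less
  have w: "w \<in> words n" using less.prems by (simp add: reduced_def)
  have p: "perm_list n w \<in> permutations_of_set {1..n}" using perm_list_perm[OF w] .
  show ?case
  proof (cases "\<exists>i. Suc i < n \<and> perm_list n w ! i < perm_list n w ! Suc i")
    case True
    then obtain i where i: "Suc i < n" "perm_list n w ! i < perm_list n w ! Suc i" by blast
    have "inversion_count (perm_list n (w @ [Suc i])) = Suc (length w)"
      using inversion_count_swap_adj(2)[of i "perm_list n w"] i perm_list_snoc[of "Suc i" n w] less.prems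
      by (simp add: reduced_def)
    then have r: "reduced n (w @ [Suc i])" using w i by (simp add: reduced_def words_append words_def)
    have "length (w @ [Suc i]) \<le> length (Delta n)"
      using inversion_count_le_length_Delta[OF perm_list_perm[of "w @ [Suc i]" n]] r by (simp add: reduced_def)
    then obtain c where "reduced n ((w @ [Suc i]) @ c) \<and> perm_list n ((w @ [Suc i]) @ c) = perm_list n (Delta n)"
      using less.hyps[OF _ r] by fastforce
    then show ?thesis by (intro exI[of _ "Suc i # c"]) simp
  next
    case False
    have "distinct (perm_list n w)" using p by (simp add: permutations_of_set_def)
    then have "\<forall>i. Suc i < n \<longrightarrow> perm_list n w ! Suc i < perm_list n w ! i"
      using False by (metis nth_eq_iff_index_eq length_perm_list Suc_lessD n_not_Suc_n linorder_neqE_nat)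
    then have "perm_list n w = perm_list n (Delta n)"
      using perm_eq_rev_upt_if_descending[OF p] perm_list_Delta by simp
    then show ?thesis using less.prems by (intro exI[of _ "[]"]) simp
  qed
qed

lemma simples_iff_reduced: "x \<in> simples n \<longleftrightarrow> (\<exists>w. reduced n w \<and> x = cls n w)"
proof
  assume "x \<in> simples n"
  then obtain w c where w: "w \<in> words n" "x = cls n w" "c \<in> words n" "braid_eq (w @ c) (Delta n)"
    by (auto simp: simples_def left_div_def)
  have "reduced n (Delta n)" by (simp add: reduced_Delta)
  then have "reduced n (w @ c)" using braid_eq_reduced[OF braid_eq_sym[OF w(4)]] by simp
  then show "\<exists>w. reduced n w \<and> x = cls n w" using reduced_prefix w(2) by blast
next
  assume "\<exists>w. reduced n w \<and> x = cls n w"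
  then obtain w where w: "reduced n w" "x = cls n w" by blast
  obtain c where c: "reduced n (w @ c)" "perm_list n (w @ c) = perm_list n (Delta n)"
    using reduced_extends_to_Delta[OF w(1)] by blast
  have "braid_eq (w @ c) (Delta n)" using matsumoto[OF c(1) reduced_Delta c(2)] by simp
  moreover have "c \<in> words n" "w \<in> words n" using c(1) by (auto simp: reduced_def words_append)
  ultimately show "x \<in> simples n" using w(2) by (auto simp: simples_def left_div_def)
qed

lemma cls_eq_iff: "v \<in> words n \<Longrightarrow> w \<in> words n \<Longrightarrow> cls n v = cls n w \<longleftrightarrow> braid_eq v w"
proof
  assume "v \<in> words n" "cls n v = cls n w"
  then have "v \<in> cls n w" by (metis cls_def braid_eq_refl mem_Collect_eq)
  then show "braid_eq v w" by (simp add: cls_def)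
next
  assume "braid_eq v w"
  then show "cls n v = cls n w" by (auto simp: cls_def intro: braid_eq_trans braid_eq_sym)
qed

text \<open>Well defined on simple braids since braid-equivalent words have the same permutation.\<close>
definition simple_perm :: "nat \<Rightarrow> nat list set \<Rightarrow> nat list" where
  "simple_perm n x = perm_list n (SOME w. w \<in> x)"

lemma simple_perm_cls: "w \<in> words n \<Longrightarrow> simple_perm n (cls n w) = perm_list n w"
proof -
  assume w: "w \<in> words n"
  then have "w \<in> cls n w" by (simp add: cls_def)
  then have "(SOME u. u \<in> cls n w) \<in> cls n w" by (rule someI)
  then have "braid_eq (SOME u. u \<in> cls n w) w" by (simp add: cls_def)
  then show ?thesis by (simp add: simple_perm_def braid_eq_perm_list)
qed

lemma bij_betw_simple_perm: "bij_betw (simple_perm n) (simples n) (permutations_of_set {1..n})"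
proof (rule bij_betw_imageI)
  show "inj_on (simple_perm n) (simples n)"
  proof (rule inj_onI)
    fix x y assume "x \<in> simples n" "y \<in> simples n" and eq: "simple_perm n x = simple_perm n y"
    then obtain v w where v: "reduced n v" "x = cls n v" and w: "reduced n w" "y = cls n w"
      by (auto simp: simples_iff_reduced)
    have words: "v \<in> words n" "w \<in> words n" using v w by (simp_all add: reduced_def)
    then have "perm_list n v = perm_list n w" using eq v w by (simp add: simple_perm_cls)
    then show "x = y" using matsumoto[OF v(1) w(1)] cls_eq_iff[OF words] v w by simp
  qed
  show "simple_perm n ` simples n = permutations_of_set {1..n}"
  proof (intro equalityI subsetI)
    fix p assume "p \<in> simple_perm n ` simples n"
    then obtain w where "reduced n w" "p = simple_perm n (cls n w)"
      by (auto simp: simples_iff_reduced)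
    then show "p \<in> permutations_of_set {1..n}"
      using perm_list_perm[of w n] by (simp add: reduced_def simple_perm_cls)
  next
    fix p assume "p \<in> permutations_of_set {1..n}"
    then obtain w where w: "reduced n w" "perm_list n w = p" using exists_reduced by blast
    then have "cls n w \<in> simples n" by (auto simp: simples_iff_reduced)
    moreover have "p = simple_perm n (cls n w)" using w by (simp add: reduced_def simple_perm_cls)
    ultimately show "p \<in> simple_perm n ` simples n" by (rule rev_image_eqI)
  qed
qed

definition left_descents :: "nat \<Rightarrow> nat list \<Rightarrow> nat set" where
  "left_descents n p = {a \<in> {1..<n}. precedes p (Suc a) a}"

definition right_descents :: "nat \<Rightarrow> nat list \<Rightarrow> nat set" where
  "right_descents n p = {i \<in> {1..<n}. p ! i < p ! (i - 1)}"

lemma DL_cls: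
  assumes r: "reduced n w"
  shows "DL n (cls n w) = left_descents n (perm_list n w)"
proof
  have w: "w \<in> words n" using r by (simp add: reduced_def)
  show "DL n (cls n w) \<subseteq> left_descents n (perm_list n w)"
  proof
    fix a assume "a \<in> DL n (cls n w)"
    then obtain c where a: "a \<in> {1..<n}" and c: "c \<in> words n" "braid_eq (a # c) w"
      by (auto simp: DL_def left_div_def cls_def intro: braid_eq_trans)
    then have "reduced n (a # c)" using braid_eq_reduced[OF braid_eq_sym r] by blast
    then show "a \<in> left_descents n (perm_list n w)"
      using reduced_ConsD(3)[of n a c] braid_eq_perm_list[OF c(2), of n] a by (simp add: left_descents_def)
  qed
  show "left_descents n (perm_list n w) \<subseteq> DL n (cls n w)"
  proof
    fix a assume "a \<in> left_descents n (perm_list n w)"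
    then obtain t where a: "a \<in> {1..<n}" and t: "reduced n (a # t)" "perm_list n (a # t) = perm_list n w"
      using exists_reduced_Cons[OF perm_list_perm[OF w]] by (auto simp: left_descents_def)
    have "braid_eq (a # t) w" using matsumoto[OF t(1) r t(2)] .
    moreover have "t \<in> words n" using t(1) by (simp add: reduced_def words_Cons)
    ultimately show "a \<in> DL n (cls n w)" using a w unfolding DL_def left_div_def cls_def by auto
  qed
qed

lemma DR_cls:
  assumes r: "reduced n w"
  shows "DR n (cls n w) = right_descents n (perm_list n w)"
proof
  have w: "w \<in> words n" using r by (simp add: reduced_def)
  show "DR n (cls n w) \<subseteq> right_descents n (perm_list n w)"
  proof
    fix a assume "a \<in> DR n (cls n w)"
    then obtain c where a: "a \<in> {1..<n}" and c: "c \<in> words n" "braid_eq (c @ [a]) w"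
      by (auto simp: DR_def right_div_def cls_def intro: braid_eq_trans)
    then have rr: "reduced n (c @ [a])" using braid_eq_reduced[OF braid_eq_sym r] by blast
    have s: "Suc (a - 1) < length (perm_list n c)" and sa: "Suc (a - 1) = a" using a by auto
    have "perm_list n (c @ [a]) ! a = perm_list n c ! (a - 1)"
      "perm_list n (c @ [a]) ! (a - 1) = perm_list n c ! a"
      using perm_list_snoc[OF a] nth_swap_adj[OF s] s sa by (auto simp: transpose_def)
    then show "a \<in> right_descents n (perm_list n w)"
      using reduced_snocD(2)[OF rr] braid_eq_perm_list[OF c(2)] a by (simp add: right_descents_def)
  qed
  show "right_descents n (perm_list n w) \<subseteq> DR n (cls n w)"
  proof
    fix a assume "a \<in> right_descents n (perm_list n w)"
    then obtain t where a: "a \<in> {1..<n}" and t: "reduced n (t @ [a])" "perm_list n (t @ [a]) = perm_list n w"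
      using exists_reduced_snoc[OF perm_list_perm[OF w]] by (auto simp: right_descents_def)
    have "braid_eq (t @ [a]) w" using matsumoto[OF t(1) r t(2)] .
    moreover have "t \<in> words n" using t(1) by (simp add: reduced_def words_append)
    ultimately show "a \<in> DR n (cls n w)" using a w unfolding DR_def right_div_def cls_def by auto
  qed
qed

lemma descents_simple_perm:
  assumes "x \<in> simples n"
  shows "DL n x = left_descents n (simple_perm n x)" "DR n x = right_descents n (simple_perm n x)"
  using assms DL_cls DR_cls simple_perm_cls by (auto simp: simples_iff_reduced reduced_def)

definition normal_perm_seqs :: "nat \<Rightarrow> nat \<Rightarrow> nat list \<Rightarrow> nat list list set" where
  "normal_perm_seqs n d q = {ps. length ps = d \<and> set ps \<subseteq> permutations_of_set {1..n} \<and>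
     (\<forall>k. Suc k < d \<longrightarrow> left_descents n (ps ! Suc k) \<subseteq> right_descents n (ps ! k)) \<and> last ps = q}"

lemma normal_seq_iff_normal_perm_seq:
  assumes x: "x \<in> simples n" and "d > 0" and xs: "xs \<in> lists (simples n)"
  shows "length xs = d \<and> normal_seq n xs \<and> last xs = x \<longleftrightarrow>
    map (simple_perm n) xs \<in> normal_perm_seqs n d (simple_perm n x)"
proof -
  let ?f = "simple_perm n"
  have desc: "DL n (xs ! Suc k) \<subseteq> DR n (xs ! k) \<longleftrightarrow>
      left_descents n (map ?f xs ! Suc k) \<subseteq> right_descents n (map ?f xs ! k)"
    if "Suc k < length xs" for k
    using that xs descents_simple_perm[of "xs ! k" n] descents_simple_perm[of "xs ! Suc k" n]
    by (simp add: in_lists_conv_set)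
  have last: "last xs = x \<longleftrightarrow> last (map ?f xs) = ?f x" if "xs \<noteq> []"
  proof -
    have "last xs \<in> simples n" using xs that by (auto simp: in_lists_conv_set)
    then show ?thesis using inj_onD[OF bij_betw_imp_inj_on[OF bij_betw_simple_perm[of n]] _ _ x] that
      by (auto simp: last_map)
  qed
  have "set (map ?f xs) \<subseteq> permutations_of_set {1..n}"
    using xs bij_betw_simple_perm by (auto dest: bij_betwE)
  have "length xs = d \<and> normal_seq n xs \<and> last xs = x \<longleftrightarrow>
      length xs = d \<and> (\<forall>k. Suc k < length xs \<longrightarrow> DL n (xs ! Suc k) \<subseteq> DR n (xs ! k)) \<and> last xs = x"
    using xs by (auto simp: normal_seq_def)
  also have "\<dots> \<longleftrightarrow> length xs = d \<and>
      (\<forall>k. Suc k < length xs \<longrightarrow> left_descents n (map ?f xs ! Suc k) \<subseteq> right_descents n (map ?f xs ! k)) \<and>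
      last (map ?f xs) = ?f x"
  proof (cases "length xs = d")
    case True
    then show ?thesis using \<open>d > 0\<close> desc last by auto
  qed simp
  also have "\<dots> \<longleftrightarrow> map ?f xs \<in> normal_perm_seqs n d (?f x)"
    using \<open>set (map ?f xs) \<subseteq> permutations_of_set {1..n}\<close> unfolding normal_perm_seqs_def
    by (simp only: mem_Collect_eq length_map) blast
  finally show ?thesis .
qed

lemma b_eq_card_normal_perm_seqs:
  assumes x: "x \<in> simples n" and "d > 0"
  shows "b n d x = card (normal_perm_seqs n d (simple_perm n x))"
proof -
  let ?f = "simple_perm n"
  let ?S = "{xs. length xs = d \<and> normal_seq n xs \<and> last xs = x}"
  have bij: "bij_betw (map ?f) (lists (simples n)) (lists (permutations_of_set {1..n}))"
    by (rule bij_lists[OF bij_betw_simple_perm])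
  note iff = normal_seq_iff_normal_perm_seq[OF assms]
  have "bij_betw (map ?f) ?S (normal_perm_seqs n d (?f x))"
  proof (rule bij_betw_subset[OF bij])
    show "?S \<subseteq> lists (simples n)" by (auto simp: normal_seq_def)
    show "map ?f ` ?S = normal_perm_seqs n d (?f x)"
    proof (intro equalityI subsetI)
      fix ps assume ps: "ps \<in> normal_perm_seqs n d (?f x)"
      then have "ps \<in> map ?f ` lists (simples n)" using bij by (auto simp: bij_betw_def normal_perm_seqs_def)
      then obtain xs where "xs \<in> lists (simples n)" "ps = map ?f xs" by blast
      then show "ps \<in> map ?f ` ?S" using iff ps by blast
    qed (use iff \<open>?S \<subseteq> lists (simples n)\<close> in blast)
  qed
  then show ?thesis by (simp add: b_def bij_betw_same_card)
qed

section \<open>Counting marked arrangements\<close>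

lemma choose_Suc_mult_fact:
  assumes "t < m"
  shows "(m choose Suc t) * Suc t * fact (m - Suc t) = (m choose t) * fact (m - t)"
proof -
  have a: "fact t * fact (m - t) * (m choose t) = (fact m :: nat)"
    using binomial_fact_lemma[of t m] assms by simp
  have b: "fact (Suc t) * fact (m - Suc t) * (m choose Suc t) = (fact m :: nat)"
    using binomial_fact_lemma[of "Suc t" m] assms by simp
  have "fact t * ((m choose Suc t) * Suc t * fact (m - Suc t)) = fact (Suc t) * fact (m - Suc t) * (m choose Suc t)"
    by (simp add: fact_Suc algebra_simps)
  also have "\<dots> = fact t * ((m choose t) * fact (m - t))" using a b by (simp add: algebra_simps)
  finally show ?thesis by simp
qed

lemma sum_block_weights_partial:
  assumes "1 \<le> t" "t \<le> m"
  shows "(\<Sum>c\<le>t. (m choose c) * (c - 1) * fact (m - c)) + (m choose t) * fact (m - t) = fact m"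
  using assms
proof (induction t rule: dec_induct)
  case base
  have "(m choose 1) * fact (m - 1) = (fact m :: nat)"
    using assms by (cases m) (auto simp: fact_Suc)
  then show ?case by (simp add: atMost_Suc)
next
  case (step t)
  have "(m choose Suc t) * (Suc t - 1) * fact (m - Suc t) + (m choose Suc t) * fact (m - Suc t)
      = (m choose t) * fact (m - t)"
    using choose_Suc_mult_fact[of t m] step by (simp add: algebra_simps)
  then show ?case using step by (simp add: algebra_simps)
qed

lemma sum_block_weights:
  assumes "1 \<le> m"
  shows "(\<Sum>c\<le>m. (m choose c) * ((if c = m then c else c - 1) * fact (m - c))) = fact m"
proof -
  have "(\<Sum>c\<le>m. (m choose c) * ((if c = m then c else c - 1) * fact (m - c))) =
      m + (\<Sum>c<m. (m choose c) * (c - 1) * fact (m - c))"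
    by (simp add: lessThan_Suc_atMost[symmetric] algebra_simps)
  also have "\<dots> = fact m"
  proof (cases "m = 1")
    case False
    then have m: "1 \<le> m - 1" "m - 1 \<le> m" "{..<m} = {..m - 1}" using assms by auto
    have "(m choose (m - 1)) = m" using binomial_symmetric[of "m - 1" m] assms by simp
    then show ?thesis using sum_block_weights_partial[OF m(1,2)] assms m(3) by (simp add: algebra_simps)
  qed simp
  finally show ?thesis .
qed

lemma sum_Pow_card:
  assumes "finite V"
  shows "(\<Sum>U\<in>Pow V. g (card U)) = (\<Sum>c\<le>card V. (card V choose c) * g c)"
proof -
  have "(\<Sum>U\<in>Pow V. g (card U)) = (\<Sum>c\<in>{..card V}. \<Sum>U\<in>{U \<in> Pow V. card U = c}. g (card U))"
    by (rule sum.group[symmetric]) (use assms card_mono in auto)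
  also have "\<dots> = (\<Sum>c\<le>card V. (card V choose c) * g c)"
  proof (rule sum.cong[OF refl])
    fix c assume "c \<in> {..card V}"
    have "(\<Sum>U\<in>{U \<in> Pow V. card U = c}. g (card U)) = (\<Sum>U\<in>{U \<in> Pow V. card U = c}. g c)" by simp
    also have "\<dots> = card {U \<in> Pow V. card U = c} * g c" by simp
    also have "{U \<in> Pow V. card U = c} = {U. U \<subseteq> V \<and> card U = c}" by auto
    finally show "(\<Sum>U\<in>{U \<in> Pow V. card U = c}. g (card U)) = (card V choose c) * g c"
      using n_subsets[OF assms] by simp
  qed
  finally show ?thesis .
qed

definition subset_arrangements :: "nat \<Rightarrow> nat" where
  "subset_arrangements n = (\<Sum>a\<le>n. (n choose a) * fact (n - a))"

lemma subset_arrangements_rec: "n \<ge> 1 \<Longrightarrow> subset_arrangements n = n * subset_arrangements (n - 1) + 1"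
proof -
  assume n: "n \<ge> 1"
  have t: "(n choose a) * fact (n - a) = n * ((n - 1 choose a) * fact (n - 1 - a))" if a: "a \<le> n - 1" for a
  proof -
    have "fact a * ((n choose a) * fact (n - a)) = (fact n :: nat)"
      using binomial_fact_lemma[of a n] a n by (simp add: algebra_simps)
    moreover have "fact a * ((n - 1 choose a) * fact (n - 1 - a)) = (fact (n - 1) :: nat)"
      using binomial_fact_lemma[of a "n - 1"] a by (simp add: algebra_simps)
    moreover have "fact n = n * (fact (n - 1) :: nat)" using n fact_reduce[of n, where 'a=nat] by (simp add: of_nat_id)
    ultimately have "fact a * ((n choose a) * fact (n - a)) = fact a * (n * ((n - 1 choose a) * fact (n - 1 - a)))"
      by (simp add: algebra_simps)
    then show ?thesis by simp
  qed
  have "{..n} = insert n {..n - 1}" using n by auto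
  then have "subset_arrangements n = (n choose n) * fact (n - n) + (\<Sum>a\<le>n - 1. (n choose a) * fact (n - a))"
    unfolding subset_arrangements_def using n by simp
  also have "\<dots> = 1 + (\<Sum>a\<le>n - 1. n * ((n - 1 choose a) * fact (n - 1 - a)))"
    using t by simp
  also have "\<dots> = 1 + n * subset_arrangements (n - 1)" by (simp add: subset_arrangements_def sum_distrib_left)
  finally show ?thesis by simp
qed

lemma subset_arrangements_pos: "subset_arrangements n \<ge> 1"
proof -
  have "(n choose n) * fact (n - n) \<le> subset_arrangements n"
    unfolding subset_arrangements_def by (rule member_le_sum) auto
  then show ?thesis by simp
qed

lemma eq_subset_arrangements_minus_one:
  fixes u :: "nat \<Rightarrow> nat"
  assumes "u 1 = 1" and "\<And>n. n \<ge> 2 \<Longrightarrow> u n = n * u (n - 1) + n"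
  shows "n \<ge> 1 \<Longrightarrow> u n = subset_arrangements n - 1"
proof (induction n rule: dec_induct)
  case base
  have "subset_arrangements 1 = 2" by (simp add: subset_arrangements_def)
  then show ?case using assms(1) by simp
next
  case (step n)
  have "u (Suc n) = Suc n * u n + Suc n" using assms(2)[of "Suc n"] step(1) by simp
  also have "\<dots> = Suc n * (subset_arrangements n - 1) + Suc n" using step by simp
  also have "\<dots> = Suc n * subset_arrangements n"
  proof -
    obtain k where "subset_arrangements n = Suc k"
      using subset_arrangements_pos[of n] by (cases "subset_arrangements n") auto
    then show ?thesis by (simp add: algebra_simps)
  qed
  also have "\<dots> = subset_arrangements (Suc n) - 1" using subset_arrangements_rec[of "Suc n"] by simp
  finally show ?case .
qed

definition exit_or_descent :: "bool \<times> nat \<Rightarrow> bool \<times> nat \<Rightarrow> bool" where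
  "exit_or_descent p q \<longleftrightarrow> (fst p \<and> \<not> fst q) \<or> snd q < snd p"

definition compatible :: "bool list \<Rightarrow> nat list \<Rightarrow> bool" where
  "compatible x w \<longleftrightarrow> successively exit_or_descent (zip x w)"

definition marked_arrs :: "nat set \<Rightarrow> (bool list \<times> nat list) set" where
  "marked_arrs V = {(x, w). length x = length w \<and> w \<in> permutations_of_set V \<and> compatible x w}"

definition marked_arrs_ending :: "nat set \<Rightarrow> (bool list \<times> nat list) set" where
  "marked_arrs_ending V = {(x, w) \<in> marked_arrs V. x = [] \<or> last x}"

lemma finite_marked_arrs [simp]: "finite (marked_arrs V)"
proof (rule finite_subset)
  show "marked_arrs V \<subseteq> {x. set x \<subseteq> UNIV \<and> length x = card V} \<times> permutations_of_set V"
    by (auto simp: marked_arrs_def dest: length_finite_permutations_of_set)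
  show "finite ({x. set x \<subseteq> (UNIV :: bool set) \<and> length x = card V} \<times> permutations_of_set V)"
    by (intro finite_cartesian_product finite_lists_length_eq) auto
qed

lemma finite_marked_arrs_ending [simp]: "finite (marked_arrs_ending V)"
  by (rule finite_subset[OF _ finite_marked_arrs]) (auto simp: marked_arrs_ending_def)

lemma compatible_nth: "length x = length w \<Longrightarrow>
  compatible x w \<longleftrightarrow> (\<forall>i. Suc i < length x \<longrightarrow> (x ! i \<and> \<not> x ! Suc i) \<or> w ! Suc i < w ! i)"
  unfolding compatible_def successively_conv_nth by (simp add: exit_or_descent_def)

lemma compatible_append:
  assumes "length x1 = length w1" "length x2 = length w2"
  shows "compatible (x1 @ x2) (w1 @ w2) \<longleftrightarrow> compatible x1 w1 \<and> compatible x2 w2 \<and>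
    (x1 = [] \<or> x2 = [] \<or> exit_or_descent (last x1, last w1) (hd x2, hd w2))"
proof -
  have "x1 \<noteq> [] \<Longrightarrow> last (zip x1 w1) = (last x1, last w1)"
    using assms(1) by (induction x1 w1 rule: list_induct2) auto
  moreover have "x2 \<noteq> [] \<Longrightarrow> hd (zip x2 w2) = (hd x2, hd w2)"
    using assms(2) by (cases x2; cases w2) auto
  moreover have "zip x1 w1 = [] \<longleftrightarrow> x1 = []" "zip x2 w2 = [] \<longleftrightarrow> x2 = []" using assms by auto
  ultimately show ?thesis unfolding compatible_def zip_append[OF assms(1)] successively_append_iff by auto
qed

lemma sorted_bool_conv: "sorted (x :: bool list) \<longleftrightarrow> successively (\<lambda>a b. \<not> (a \<and> \<not> b)) x"
proof -
  have "(\<lambda>a b. \<not> (a \<and> \<not> b)) = ((\<le>) :: bool \<Rightarrow> bool \<Rightarrow> bool)" by (intro ext) simp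
  then show ?thesis by (simp only: successively_conv_sorted_wrt[OF transp_on_le])
qed

lemma compatible_if_sorted: "sorted x \<Longrightarrow> length x = length w \<Longrightarrow> compatible x w \<longleftrightarrow> sorted_wrt (>) w"
  unfolding sorted_wrt_greater_nth using compatible_nth[of x w]
  unfolding sorted_bool_conv successively_conv_nth by auto

lemma sorted_False_True: "sorted (replicate a False @ replicate c True)"
  by (simp add: sorted_append)

lemma sorted_bool_form: "sorted x \<Longrightarrow> \<exists>a c. x = replicate a False @ replicate c True"
proof (induction x)
  case Nil then show ?case by (intro exI[of _ 0]) simp
next
  case (Cons y x)
  then obtain a c where x: "x = replicate a False @ replicate c True" by auto
  show ?case
  proof (cases y)
    case False
    then show ?thesis using x by (intro exI[of _ "Suc a"] exI[of _ c]) simp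
  next
    case True
    then have "a = 0" using Cons.prems x by (cases a) auto
    then show ?thesis using x True by (intro exI[of _ 0] exI[of _ "Suc c"]) simp
  qed
qed

lemma append_replicate_eq:
  "xs @ replicate k v = ys @ replicate k' v \<Longrightarrow> (xs = [] \<or> last xs \<noteq> v) \<Longrightarrow> (ys = [] \<or> last ys \<noteq> v)
    \<Longrightarrow> xs = ys \<and> k = k'"
proof (induction k arbitrary: k')
  case 0
  show ?case
  proof (cases k')
    case (Suc j)
    then have "xs = (ys @ replicate j v) @ [v]" using "0.prems"(1) by (simp add: replicate_append_same)
    then show ?thesis using "0.prems"(2) by simp
  qed (use "0.prems" in simp)
next
  case (Suc k)
  show ?case
  proof (cases k')
    case 0
    then have "ys = (xs @ replicate k v) @ [v]" using Suc.prems(1) by (simp add: replicate_append_same)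
    then show ?thesis using Suc.prems(3) by simp
  next
    case (Suc j)
    then have "(xs @ replicate k v) @ [v] = (ys @ replicate j v) @ [v]"
      using Suc.prems(1) by (simp add: replicate_append_same)
    then show ?thesis using Suc.IH Suc.prems Suc by simp
  qed
qed

lemma split_trailing_False: "\<exists>x1 k. x = x1 @ replicate k False \<and> (x1 = [] \<or> last x1)"
proof (induction x rule: rev_induct)
  case (snoc y x)
  show ?case
  proof (cases y)
    case True then show ?thesis by (intro exI[of _ "x @ [y]"] exI[of _ 0]) simp
  next
    case False
    from snoc obtain x1 k where "x = x1 @ replicate k False" "x1 = [] \<or> last x1" by blast
    then show ?thesis using False by (intro exI[of _ x1] exI[of _ "Suc k"]) (simp add: replicate_append_same)
  qed
qed simp

lemma split_last_exit:
  "\<exists>x1 x2. x = x1 @ x2 \<and> sorted x2 \<and> (x1 = [] \<or> last x1 \<and> x2 \<noteq> [] \<and> \<not> hd x2)"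
proof (induction x rule: rev_induct)
  case (snoc y x)
  then obtain x1 x2 where h: "x = x1 @ x2" "sorted x2" "x1 = [] \<or> last x1 \<and> x2 \<noteq> [] \<and> \<not> hd x2"
    by blast
  have sorted_snoc: "sorted (z @ [y]) \<longleftrightarrow> sorted z \<and> (z = [] \<or> \<not> (last z \<and> \<not> y))" for z
    unfolding sorted_bool_conv successively_append_iff by auto
  show ?case
  proof (cases "x2 \<noteq> [] \<and> last x2 \<and> \<not> y")
    case True
    then have "x @ [y] = x @ [y] \<and> sorted [y] \<and> (last x \<and> [y] \<noteq> [] \<and> \<not> hd [y])"
      using h by simp
    then show ?thesis by blast
  next
    case False
    then have "x @ [y] = x1 @ (x2 @ [y]) \<and> sorted (x2 @ [y]) \<and>
        (x1 = [] \<or> last x1 \<and> x2 @ [y] \<noteq> [] \<and> \<not> hd (x2 @ [y]))"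
      using h sorted_snoc[of x2] by auto
    then show ?thesis by blast
  qed
qed simp

definition append_block :: "nat set \<Rightarrow> bool list \<Rightarrow> bool list \<times> nat list \<Rightarrow> bool list \<times> nat list" where
  "append_block U y = (\<lambda>(x, w). (x @ y, w @ desc_list U))"

lemma append_block_marked_arrs:
  assumes V: "finite V" and U: "U \<subseteq> V" and xw: "(x, w) \<in> marked_arrs (V - U)"
    and y: "sorted y" "length y = card U" and junction: "x = [] \<or> y = [] \<or> last x \<and> \<not> hd y"
  shows "append_block U y (x, w) \<in> marked_arrs V"
proof -
  have fU: "finite U" using U V by (rule finite_subset)
  have l: "length y = length (desc_list U)" using desc_list_props[OF fU] y(2) by simp
  have x: "length x = length w" "w \<in> permutations_of_set (V - U)" "compatible x w"
    using xw by (auto simp: marked_arrs_def)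
  have "compatible y (desc_list U)" using compatible_if_sorted[OF y(1) l] desc_list_props[OF fU] by simp
  moreover have "x = [] \<or> y = [] \<or> exit_or_descent (last x, last w) (hd y, hd (desc_list U))"
    using junction by (auto simp: exit_or_descent_def)
  ultimately have "compatible (x @ y) (w @ desc_list U)"
    using compatible_append[OF x(1) l] x(3) by simp
  moreover have "w @ desc_list U \<in> permutations_of_set V"
    using x(2) desc_list_props[OF fU] U by (auto simp: permutations_of_set_def)
  ultimately show ?thesis using x(1) l by (simp add: append_block_def marked_arrs_def)
qed

lemma marked_arrs_append_sorted:
  assumes xyw: "(x @ y, w) \<in> marked_arrs V" and y: "sorted y"
  obtains U w1 where "U \<subseteq> V" "card U = length y" "(x, w1) \<in> marked_arrs (V - U)"
    "(x @ y, w) = append_block U y (x, w1)"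
proof -
  define w1 w2 where "w1 = take (length x) w" and "w2 = drop (length x) w"
  have h: "length (x @ y) = length w" "w \<in> permutations_of_set V" "compatible (x @ y) w"
    using xyw by (auto simp: marked_arrs_def)
  have ww: "w = w1 @ w2" and l: "length x = length w1" "length y = length w2"
    using h(1) by (simp_all add: w1_def w2_def)
  have c: "compatible x w1" "compatible y w2" using compatible_append[OF l] h(3) ww by auto
  then have "w2 = desc_list (set w2)" using compatible_if_sorted[OF y l(2)] desc_list_set by blast
  moreover have "distinct (w1 @ w2)" "set (w1 @ w2) = V"
    using h(2) ww by (simp_all add: permutations_of_set_def)
  ultimately show ?thesis
    using that[of "set w2" w1] l c(1) ww
    by (auto simp: append_block_def marked_arrs_def permutations_of_set_def distinct_card)
qed

lemma append_block_inj:
  assumes "append_block U y (x, w) = append_block U' y (x, w')" "length x = length w"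
    "length x = length w'" "finite U" "finite U'"
  shows "U = U'" "w = w'"
proof -
  have "w @ desc_list U = w' @ desc_list U'" using assms(1) by (simp add: append_block_def)
  then have "w = w'" "desc_list U = desc_list U'" using assms(2,3) by simp_all
  then show "w = w'" "U = U'" using desc_list_props(1) assms(4,5) by metis+
qed

definition append_False_block :: "nat set \<times> (bool list \<times> nat list) \<Rightarrow> bool list \<times> nat list" where
  "append_False_block = (\<lambda>(U, z). append_block U (replicate (card U) False) z)"

text \<open>Cutting off the trailing \<open>False\<close>s (under which the arrangement decreases) leaves a
  marked arrangement whose mark ends in \<open>True\<close>.\<close>
lemma marked_arrs_decomp:
  assumes V: "finite V"
  shows "marked_arrs V = append_False_block ` Sigma (Pow V) (\<lambda>U. marked_arrs_ending (V - U))"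
proof (intro equalityI subsetI)
  fix z assume z: "z \<in> marked_arrs V"
  obtain x w where zxw: "z = (x, w)" by (cases z)
  obtain x1 k where x1: "x = x1 @ replicate k False" "x1 = [] \<or> last x1"
    using split_trailing_False by blast
  obtain U w1 where "U \<subseteq> V" "card U = k" "(x1, w1) \<in> marked_arrs (V - U)"
    "z = append_block U (replicate k False) (x1, w1)"
    using marked_arrs_append_sorted[of x1 "replicate k False" w V] z zxw x1(1) by auto
  then show "z \<in> append_False_block ` Sigma (Pow V) (\<lambda>U. marked_arrs_ending (V - U))"
    using x1(2) by (force simp: marked_arrs_ending_def append_False_block_def)
next
  fix z assume "z \<in> append_False_block ` Sigma (Pow V) (\<lambda>U. marked_arrs_ending (V - U))"
  then obtain U x1 w1 where "U \<subseteq> V" "(x1, w1) \<in> marked_arrs_ending (V - U)"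
    "z = append_block U (replicate (card U) False) (x1, w1)" by (auto simp: append_False_block_def)
  then show "z \<in> marked_arrs V"
    using append_block_marked_arrs[OF V, of U x1 w1 "replicate (card U) False"]
    by (cases "card U") (auto simp: marked_arrs_ending_def)
qed

lemma inj_on_append_False_block:
  assumes V: "finite V"
  shows "inj_on append_False_block (Sigma (Pow V) (\<lambda>U. marked_arrs_ending (V - U)))"
proof (rule inj_onI)
  fix p q assume p: "p \<in> Sigma (Pow V) (\<lambda>U. marked_arrs_ending (V - U))"
    and q: "q \<in> Sigma (Pow V) (\<lambda>U. marked_arrs_ending (V - U))"
    and e: "append_False_block p = append_False_block q"
  obtain U x w U' x' w' where pq: "p = (U, x, w)" "q = (U', x', w')" by (cases p, cases q) auto
  have U: "U \<subseteq> V" "U' \<subseteq> V" "x = [] \<or> last x" "x' = [] \<or> last x'"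
    "length x = length w" "length x' = length w'"
    using p q pq by (auto simp: marked_arrs_ending_def marked_arrs_def)
  have e': "x @ replicate (card U) False = x' @ replicate (card U') False"
    using e pq by (simp add: append_False_block_def append_block_def)
  then have xU: "x = x'" "card U = card U'" using append_replicate_eq[OF e'] U(3,4) by auto
  then have "append_block U (replicate (card U) False) (x, w) = append_block U' (replicate (card U) False) (x, w')"
    using e pq by (simp add: append_False_block_def)
  then have "U = U'" "w = w'"
    using append_block_inj U xU V finite_subset by (metis (no_types, lifting))+
  then show "p = q" using pq xU by simp
qed

lemma card_marked_arrs_if_ending:
  assumes V: "finite V" and ending: "\<And>W. W \<subseteq> V \<Longrightarrow> card (marked_arrs_ending W) = fact (card W)"
  shows "card (marked_arrs V) = subset_arrangements (card V)"
proof -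
  have "card (marked_arrs V) = card (Sigma (Pow V) (\<lambda>U. marked_arrs_ending (V - U)))"
    unfolding marked_arrs_decomp[OF V] by (rule card_image[OF inj_on_append_False_block[OF V]])
  also have "\<dots> = (\<Sum>U\<in>Pow V. card (marked_arrs_ending (V - U)))"
    using V by (intro card_SigmaI) auto
  also have "\<dots> = (\<Sum>U\<in>Pow V. fact (card V - card U))"
    using ending V by (intro sum.cong) (auto simp: card_Diff_subset finite_subset)
  also have "\<dots> = subset_arrangements (card V)"
    unfolding subset_arrangements_def by (rule sum_Pow_card[OF V])
  finally show ?thesis .
qed

text \<open>The last block of a mark ending in \<open>True\<close> (after its last exit) has the form
  \<open>False\<^sup>a True\<^sup>c\<close> with \<open>c > 0\<close>, and \<open>a > 0\<close> unless it is the whole mark.\<close>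
definition last_block_params :: "nat set \<Rightarrow> (nat set \<times> nat) set" where
  "last_block_params V = (SIGMA U:Pow V - {{}}. {(if U = V then 0 else 1)..<card U})"

definition append_ending_block :: "(nat set \<times> nat) \<times> (bool list \<times> nat list) \<Rightarrow> bool list \<times> nat list" where
  "append_ending_block = (\<lambda>((U, a), z). append_block U (replicate a False @ replicate (card U - a) True) z)"

lemma marked_arrs_ending_cases:
  assumes V: "finite V" "V \<noteq> {}" and z: "z \<in> marked_arrs_ending V"
  obtains U a x1 w1 where "(U, a) \<in> last_block_params V" "(x1, w1) \<in> marked_arrs_ending (V - U)"
    "z = append_ending_block ((U, a), (x1, w1))"
proof -
  obtain x w where zxw: "z = (x, w)" by (cases z)
  have "length x = card V" using z zxw
    by (auto simp: marked_arrs_ending_def marked_arrs_def dest: length_finite_permutations_of_set)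
  then have x: "x \<noteq> []" "last x" using z zxw V by (auto simp: marked_arrs_ending_def)
  obtain x1 x2 where x12: "x = x1 @ x2" "sorted x2" "x1 = [] \<or> last x1 \<and> x2 \<noteq> [] \<and> \<not> hd x2"
    using split_last_exit by blast
  obtain a c where x2: "x2 = replicate a False @ replicate c True" using sorted_bool_form[OF x12(2)] by blast
  obtain U w1 where U: "U \<subseteq> V" "card U = a + c" "(x1, w1) \<in> marked_arrs (V - U)"
    "z = append_block U x2 (x1, w1)"
    using marked_arrs_append_sorted[of x1 x2 w V] z zxw x12 x2 by (auto simp: marked_arrs_ending_def)
  have "x2 \<noteq> []" using x x12 by auto
  then have "c \<noteq> 0" using x x12(1) x2 by (cases c) (auto simp: last_append)
  moreover have "a \<noteq> 0" if "U \<noteq> V"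
  proof -
    have "length x1 = card (V - U)" using U(3)
      by (auto simp: marked_arrs_def dest: length_finite_permutations_of_set)
    moreover have "card U < card V" using U(1) that V(1) by (meson psubsetI psubset_card_mono)
    ultimately have "x1 \<noteq> []" using U(1) V(1) by (auto simp: card_Diff_subset finite_subset)
    then show ?thesis using x12(3) x2 by (cases a) auto
  qed
  ultimately have "(U, a) \<in> last_block_params V"
    using U(1,2) unfolding last_block_params_def by (cases "U = V") auto
  moreover have "(x1, w1) \<in> marked_arrs_ending (V - U)" using U(3) x12(3) by (auto simp: marked_arrs_ending_def)
  moreover have "z = append_ending_block ((U, a), (x1, w1))" using U(2,4) x2 by (simp add: append_ending_block_def)
  ultimately show ?thesis using that by blast
qed

lemma append_ending_block_marked_arrs_ending:
  assumes V: "finite V" and Ua: "(U, a) \<in> last_block_params V" and x1: "(x1, w1) \<in> marked_arrs_ending (V - U)"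
  shows "append_ending_block ((U, a), (x1, w1)) \<in> marked_arrs_ending V"
proof -
  have U: "U \<subseteq> V" "U \<noteq> V \<longrightarrow> 1 \<le> a" "a < card U"
    using Ua by (auto simp: last_block_params_def split: if_splits)
  have x1: "(x1, w1) \<in> marked_arrs (V - U)" "x1 = [] \<or> last x1" using x1 by (auto simp: marked_arrs_ending_def)
  have "x1 = [] \<or> last x1 \<and> \<not> hd (replicate a False @ replicate (card U - a) True)"
    using U(2) x1 by (cases a) (auto simp: marked_arrs_def)
  then have "append_block U (replicate a False @ replicate (card U - a) True) (x1, w1) \<in> marked_arrs V"
    using append_block_marked_arrs[OF V U(1) x1(1) sorted_False_True] U(3) by auto
  then show ?thesis using U(3) by (simp add: marked_arrs_ending_def append_block_def append_ending_block_def)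
qed

lemma marked_arrs_ending_decomp:
  assumes V: "finite V" "V \<noteq> {}"
  shows "marked_arrs_ending V =
    append_ending_block ` Sigma (last_block_params V) (\<lambda>(U, a). marked_arrs_ending (V - U))"
proof (intro equalityI subsetI)
  fix z assume "z \<in> marked_arrs_ending V"
  then obtain U a x1 w1 where "(U, a) \<in> last_block_params V" "(x1, w1) \<in> marked_arrs_ending (V - U)"
    "z = append_ending_block ((U, a), (x1, w1))" by (rule marked_arrs_ending_cases[OF V])
  then show "z \<in> append_ending_block ` Sigma (last_block_params V) (\<lambda>(U, a). marked_arrs_ending (V - U))"
    by force
qed (auto intro: append_ending_block_marked_arrs_ending[OF V(1)])

lemma inj_on_append_ending_block:
  assumes V: "finite V"
  shows "inj_on append_ending_block (Sigma (last_block_params V) (\<lambda>(U, a). marked_arrs_ending (V - U)))"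
proof (rule inj_onI)
  fix p q assume p: "p \<in> Sigma (last_block_params V) (\<lambda>(U, a). marked_arrs_ending (V - U))"
    and q: "q \<in> Sigma (last_block_params V) (\<lambda>(U, a). marked_arrs_ending (V - U))"
    and e: "append_ending_block p = append_ending_block q"
  obtain U a x w U' a' x' w' where pq: "p = ((U, a), x, w)" "q = ((U', a'), x', w')"
    by (cases p, cases q) auto
  have no_True_end: "x @ replicate a False = [] \<or> last (x @ replicate a False) \<noteq> True"
    if "((U, a), (x, w)) \<in> Sigma (last_block_params V) (\<lambda>(U, a). marked_arrs_ending (V - U))" for U a x w
  proof (cases a)
    case 0
    then have "U = V" using that by (auto simp: last_block_params_def split: if_splits)
    then have "x = []" using that by (auto simp: marked_arrs_ending_def marked_arrs_def)
    then show ?thesis using 0 by simp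
  qed simp
  have "(x @ replicate a False) @ replicate (card U - a) True =
      (x' @ replicate a' False) @ replicate (card U' - a') True"
    using e pq by (simp add: append_ending_block_def append_block_def)
  then have "x @ replicate a False = x' @ replicate a' False \<and> card U - a = card U' - a'"
    using no_True_end[of U a x w] no_True_end[of U' a' x' w'] p q pq by (intro append_replicate_eq) auto
  then have e': "x @ replicate a False = x' @ replicate a' False" "card U - a = card U' - a'" by auto
  have x: "x = [] \<or> last x" "x' = [] \<or> last x'" "length x = length w" "length x' = length w'"
    "U \<subseteq> V" "U' \<subseteq> V" "a < card U" "a' < card U'"
    using p q pq by (auto simp: marked_arrs_ending_def marked_arrs_def last_block_params_def)
  then have xa: "x = x'" "a = a'" using append_replicate_eq[OF e'(1)] by auto
  then have "card U = card U'" using e'(2) x(7,8) by simp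
  then have "append_block U (replicate a False @ replicate (card U - a) True) (x, w) =
      append_block U' (replicate a False @ replicate (card U - a) True) (x, w')"
    using e pq xa by (simp add: append_ending_block_def)
  then have "U = U'" "w = w'"
    using append_block_inj x xa V finite_subset by (metis (no_types, lifting))+
  then show "p = q" using pq xa by simp
qed

lemma sum_last_block_params:
  assumes V: "finite V"
  shows "(\<Sum>p\<in>last_block_params V. f (card (fst p))) =
    (\<Sum>c\<le>card V. (card V choose c) * ((if c = card V then c else c - 1) * f c))"
proof -
  let ?g = "\<lambda>c. (if c = card V then c else c - 1) * f c"
  have "(\<Sum>p\<in>last_block_params V. f (card (fst p))) =
      (\<Sum>U\<in>Pow V - {{}}. \<Sum>a\<in>{(if U = V then 0 else 1)..<card U}. f (card U))"
    unfolding last_block_params_def using V by (subst sum.Sigma) (auto simp: split_def)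
  also have "\<dots> = (\<Sum>U\<in>Pow V - {{}}. ?g (card U))"
  proof (rule sum.cong[OF refl])
    fix U assume "U \<in> Pow V - {{}}"
    then have "U = V \<longleftrightarrow> card U = card V" using V card_subset_eq[of V U] by auto
    then show "(\<Sum>a\<in>{(if U = V then 0 else 1)..<card U}. f (card U)) = ?g (card U)" by simp
  qed
  also have "\<dots> = (\<Sum>U\<in>Pow V. ?g (card U))" using V by (intro sum.mono_neutral_left) auto
  also have "\<dots> = (\<Sum>c\<le>card V. (card V choose c) * ?g c)" by (rule sum_Pow_card[OF V])
  finally show ?thesis .
qed

lemma card_marked_arrs_ending_if_smaller:
  assumes V: "finite V" "V \<noteq> {}"
    and smaller: "\<And>U. U \<subseteq> V \<Longrightarrow> U \<noteq> {} \<Longrightarrow> card (marked_arrs_ending (V - U)) = fact (card (V - U))"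
  shows "card (marked_arrs_ending V) = fact (card V)"
proof -
  have "card (marked_arrs_ending V) =
      card (Sigma (last_block_params V) (\<lambda>(U, a). marked_arrs_ending (V - U)))"
    unfolding marked_arrs_ending_decomp[OF V] by (rule card_image[OF inj_on_append_ending_block[OF V(1)]])
  also have "\<dots> = (\<Sum>p\<in>last_block_params V. card (marked_arrs_ending (V - fst p)))"
    using V(1) by (subst card_SigmaI) (auto simp: last_block_params_def split_def)
  also have "\<dots> = (\<Sum>p\<in>last_block_params V. fact (card V - card (fst p)))"
  proof (rule sum.cong[OF refl])
    fix p assume "p \<in> last_block_params V"
    then have "fst p \<subseteq> V" "fst p \<noteq> {}" by (auto simp: last_block_params_def)
    then show "card (marked_arrs_ending (V - fst p)) = fact (card V - card (fst p))"
      using smaller V(1) by (simp add: card_Diff_subset finite_subset)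
  qed
  also have "\<dots> = fact (card V)"
  proof -
    have "1 \<le> card V" using V by (simp add: Suc_le_eq card_gt_0_iff)
    then show ?thesis
      using sum_last_block_params[OF V(1), of "\<lambda>c. fact (card V - c)"] sum_block_weights by simp
  qed
  finally show ?thesis .
qed

theorem card_marked_arrs_ending: "finite V \<Longrightarrow> card (marked_arrs_ending V) = fact (card V)"
proof (induction "card V" arbitrary: V rule: less_induct)
  case less
  show ?case
  proof (cases "V = {}")
    case True
    then have "marked_arrs_ending V = {([], [])}"
      by (auto simp: marked_arrs_ending_def marked_arrs_def compatible_def)
    then show ?thesis using True by simp
  next
    case False
    have "card (V - U) < card V" if "U \<subseteq> V" "U \<noteq> {}" for U
    proof -
      have "0 < card U" "card U \<le> card V"
        using that less.prems by (auto simp: card_gt_0_iff finite_subset card_mono)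
      then show ?thesis using that less.prems by (simp add: card_Diff_subset finite_subset)
    qed
    then show ?thesis
      using card_marked_arrs_ending_if_smaller[OF less.prems False] less.hyps less.prems by blast
  qed
qed

theorem card_marked_arrs: "finite V \<Longrightarrow> card (marked_arrs V) = subset_arrangements (card V)"
  by (rule card_marked_arrs_if_ending) (auto intro: card_marked_arrs_ending finite_subset)


section \<open>Normal sequences ending in the half twist of the first n - 1 strands\<close>

lemma right_descents_append:
  assumes "p = u @ v" "sorted_wrt (>) u" "sorted_wrt (>) v" "length p = n"
  shows "{1..<n} - {length u} \<subseteq> right_descents n p"
proof
  fix i assume i: "i \<in> {1..<n} - {length u}"
  then have i1: "1 \<le> i" "i < n" "i \<noteq> length u" by auto
  obtain j where j: "i = Suc j" using i1 by (cases i) auto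
  show "i \<in> right_descents n p"
  proof (cases "i < length u")
    case True
    have "u ! Suc j < u ! j" using assms(2) True j unfolding sorted_wrt_greater_nth by simp
    then show ?thesis using True i1 assms(1) j by (simp add: right_descents_def nth_append)
  next
    case False
    then have g: "length u \<le> j" using i1 j by simp
    have lv: "Suc (j - length u) < length v" using assms(1,4) g i1 j by simp
    have "v ! Suc (j - length u) < v ! (j - length u)" using assms(3) lv unfolding sorted_wrt_greater_nth by simp
    moreover have "p ! i = v ! Suc (j - length u)" "p ! (i - 1) = v ! (j - length u)"
      using assms(1) g j by (simp_all add: nth_append Suc_diff_le)
    ultimately show ?thesis using i1 by (simp add: right_descents_def)
  qed
qed

lemma sorted_take_drop_of_right_descents:
  assumes l: "length p = n" and m: "m \<le> n" and R: "{1..<n} - {m} \<subseteq> right_descents n p"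
  shows "sorted_wrt (>) (take m p)" "sorted_wrt (>) (drop m p)"
proof -
  have D: "p ! i < p ! (i - 1)" if "1 \<le> i" "i < n" "i \<noteq> m" for i
    using R that by (auto simp: right_descents_def)
  show "sorted_wrt (>) (take m p)" unfolding sorted_wrt_greater_nth
  proof (intro allI impI)
    fix i assume "Suc i < length (take m p)"
    then have "Suc i < m" "Suc i < n" using l m by auto
    then show "take m p ! Suc i < take m p ! i" using D[of "Suc i"] by simp
  qed
  show "sorted_wrt (>) (drop m p)" unfolding sorted_wrt_greater_nth
  proof (intro allI impI)
    fix i assume "Suc i < length (drop m p)"
    then have "m + Suc i < n" using l m by auto
    then show "drop m p ! Suc i < drop m p ! i" using D[of "m + Suc i"] l m by simp
  qed
qed

definition two_runs :: "nat \<Rightarrow> nat set \<Rightarrow> nat list" where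
  "two_runs n A = desc_list A @ desc_list ({1..n} - A)"

lemma finite_subset_interval: "A \<subseteq> {1..(n::nat)} \<Longrightarrow> finite A"
  by (rule finite_subset[OF _ finite_atLeastAtMost])

lemma two_runs_perm: "A \<subseteq> {1..n} \<Longrightarrow> two_runs n A \<in> permutations_of_set {1..n}"
  using desc_list_props[OF finite_subset_interval] desc_list_props[of "{1..n} - A"]
  by (auto simp: two_runs_def permutations_of_set_def)

lemma left_descents_two_runs:
  assumes A: "A \<subseteq> {1..n}"
  shows "left_descents n (two_runs n A) = {k \<in> {1..<n}. \<not> (k \<in> A \<and> Suc k \<notin> A)}"
proof -
  have dA: "set (desc_list A) = A" "sorted_wrt (>) (desc_list A)"
    using desc_list_props[OF finite_subset_interval[OF A]] by auto
  have dB: "set (desc_list ({1..n} - A)) = {1..n} - A" "sorted_wrt (>) (desc_list ({1..n} - A))"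
    using desc_list_props[of "{1..n} - A"] by auto
  have "precedes (two_runs n A) (Suc k) k \<longleftrightarrow> \<not> (k \<in> A \<and> Suc k \<notin> A)" if "k \<in> {1..<n}" for k
    using that unfolding two_runs_def precedes_append precedes_sorted_desc[OF dA(2)]
      precedes_sorted_desc[OF dB(2)] dA(1) dB(1) by auto
  then show ?thesis by (auto simp: left_descents_def)
qed

lemma right_descents_two_runs:
  assumes A: "A \<subseteq> {1..n}"
  shows "{1..<n} - {card A} \<subseteq> right_descents n (two_runs n A)"
proof -
  have "length (two_runs n A) = n" using length_perm[OF two_runs_perm[OF A]] .
  then show ?thesis
    using right_descents_append[of "two_runs n A" "desc_list A" "desc_list ({1..n} - A)" n]
      desc_list_props[OF finite_subset_interval[OF A]] desc_list_props[of "{1..n} - A"]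
    by (simp add: two_runs_def)
qed

lemma two_runs_of_right_descents:
  assumes p: "p \<in> permutations_of_set {1..n}" and m: "m \<le> n" and R: "{1..<n} - {m} \<subseteq> right_descents n p"
  obtains A where "A \<subseteq> {1..n}" "card A = m" "p = two_runs n A"
proof -
  have l: "length p = n" using length_perm[OF p] .
  have d: "distinct p" "set p = {1..n}" using p by (auto simp: permutations_of_set_def)
  have dt: "sorted_wrt (>) (take m p)" "sorted_wrt (>) (drop m p)"
    using sorted_take_drop_of_right_descents[OF l m R] by auto
  define A where "A = set (take m p)"
  have "distinct (take m p @ drop m p)" "set (take m p @ drop m p) = {1..n}" using d by simp_all
  then have "set (drop m p) = {1..n} - A" unfolding A_def distinct_append set_append by blast
  moreover have "take m p = desc_list A" using desc_list_set[OF dt(1)] by (simp add: A_def)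
  ultimately have "p = two_runs n A"
    using desc_list_set[OF dt(2)] unfolding two_runs_def by (metis append_take_drop_id)
  moreover have "card A = m" using d l m by (simp add: A_def distinct_card)
  moreover have "A \<subseteq> {1..n}" using set_take_subset[of m p] d(2) by (simp add: A_def)
  ultimately show ?thesis using that by blast
qed

lemma two_runs_inj:
  assumes "A \<subseteq> {1..n}" "A' \<subseteq> {1..n}" "card A = card A'" "two_runs n A = two_runs n A'"
  shows "A = A'"
proof -
  have fA: "finite A" "finite A'" using assms(1,2) finite_subset_interval by auto
  then have "desc_list A = desc_list A'"
    using assms(3,4) desc_list_props(3) by (simp add: two_runs_def append_eq_append_conv)
  then show "A = A'" using desc_list_props(1)[OF fA(1)] desc_list_props(1)[OF fA(2)] by metis
qed

lemma last_two_runs: "j \<in> {1..n} \<Longrightarrow> last (two_runs n ({1..n} - {j})) = j"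
proof -
  assume "j \<in> {1..n}"
  then have "{1..n} - ({1..n} - {j}) = {j}" by auto
  then show ?thesis by (simp add: two_runs_def desc_list_def)
qed

lemma perm_list_Delta_pred: "n \<ge> 1 \<Longrightarrow> perm_list n (Delta (n - 1)) = two_runs n {1..n - 1}"
proof -
  assume n: "n \<ge> 1"
  have "{1..n - 1} = {1..<n}" "{1..n} - {1..n - 1} = {n}" using n by auto
  then have "two_runs n {1..n - 1} = rev [1..<n] @ [n]"
    by (simp only: two_runs_def desc_list_def sorted_list_of_set_range) simp
  also have "\<dots> = perm_list n (Delta (n - 1))"
    using n by (intro nth_equalityI) (auto simp: nth_perm_list_Delta nth_append rev_nth simp del: upt_Suc)
  finally show ?thesis by simp
qed

lemma left_descents_Delta_pred:
  assumes "n \<ge> 1"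
  shows "left_descents n (perm_list n (Delta (n - 1))) = {1..<n} - {n - 1}"
proof -
  have "left_descents n (two_runs n {1..n - 1}) =
      {k \<in> {1..<n}. \<not> (k \<in> {1..n - 1} \<and> Suc k \<notin> {1..n - 1})}"
    by (rule left_descents_two_runs) auto
  also have "\<dots> = {1..<n} - {n - 1}" by auto
  finally show ?thesis using perm_list_Delta_pred[OF assms] by simp
qed

text \<open>A normal sequence \<open>(w, p\<^sub>2, p\<^sub>3, \<Delta>\<^sub>n\<^sub>-\<^sub>1)\<close> is determined by \<open>w\<close> and the set \<open>A\<close> of
  entries of the first decreasing run of \<open>p\<^sub>2\<close>; the condition on \<open>w\<close> says that its right descents
  contain the left descents of \<open>p\<^sub>2\<close>.\<close>
definition descent_pairs :: "nat \<Rightarrow> (nat set \<times> nat list) set" where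
  "descent_pairs n = {(A, w). A \<subseteq> {1..n} \<and> A \<noteq> {1..n} \<and> w \<in> permutations_of_set {1..n} \<and>
     (\<forall>k\<in>{1..<n}. (k \<in> A \<and> Suc k \<notin> A) \<or> w ! k < w ! (k - 1))}"

definition seq_of_pair :: "nat \<Rightarrow> nat set \<times> nat list \<Rightarrow> nat list list" where
  "seq_of_pair n = (\<lambda>(A, w).
     [w, two_runs n A, two_runs n ({1..n} - {Suc (card A)}), perm_list n (Delta (n - 1))])"

lemma card_less_of_psubset: "A \<subseteq> {1..n} \<Longrightarrow> A \<noteq> {1..n} \<Longrightarrow> card A < n"
  using psubset_card_mono[OF finite_atLeastAtMost, of A 1 n] by auto

lemma seq_of_pair_normal:
  assumes n: "n \<ge> 1" and Aw: "(A, w) \<in> descent_pairs n"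
  shows "seq_of_pair n (A, w) \<in> normal_perm_seqs n 4 (perm_list n (Delta (n - 1)))"
proof -
  have A: "A \<subseteq> {1..n}" "A \<noteq> {1..n}" "w \<in> permutations_of_set {1..n}"
    and C: "\<forall>k\<in>{1..<n}. (k \<in> A \<and> Suc k \<notin> A) \<or> w ! k < w ! (k - 1)"
    using Aw by (auto simp: descent_pairs_def)
  define A3 where "A3 = {1..n} - {Suc (card A)}"
  have A3: "A3 \<subseteq> {1..n}" "card A3 = n - 1"
    using card_less_of_psubset[OF A(1,2)] by (auto simp: A3_def)
  have "left_descents n (two_runs n A) \<subseteq> right_descents n w"
    using C by (auto simp: left_descents_two_runs[OF A(1)] right_descents_def)
  moreover have "left_descents n (two_runs n A3) \<subseteq> {1..<n} - {card A}"
    unfolding left_descents_two_runs[OF A3(1)] by (auto simp: A3_def)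
  then have "left_descents n (two_runs n A3) \<subseteq> right_descents n (two_runs n A)"
    using right_descents_two_runs[OF A(1)] by blast
  moreover have "left_descents n (perm_list n (Delta (n - 1))) \<subseteq> right_descents n (two_runs n A3)"
    using left_descents_Delta_pred[OF n] right_descents_two_runs[OF A3(1)] A3(2) by simp
  moreover have "two_runs n A \<in> permutations_of_set {1..n}" "two_runs n A3 \<in> permutations_of_set {1..n}"
    "perm_list n (Delta (n - 1)) \<in> permutations_of_set {1..n}"
    using two_runs_perm A(1) A3(1) perm_list_perm[OF Delta_words] by auto
  ultimately show ?thesis using A(3)
    by (auto simp: normal_perm_seqs_def seq_of_pair_def A3_def less_Suc_eq numeral_eq_Suc)
qed

lemma normal_perm_seq_Delta_pred_cases:
  assumes n: "n \<ge> 1" and ps: "ps \<in> normal_perm_seqs n 4 (perm_list n (Delta (n - 1)))"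
  obtains A w where "(A, w) \<in> descent_pairs n" "ps = seq_of_pair n (A, w)"
proof -
  obtain p1 p2 p3 p4 where ps4: "ps = [p1, p2, p3, p4]"
    using ps by (auto simp: normal_perm_seqs_def numeral_eq_Suc length_Suc_conv)
  have P: "p1 \<in> permutations_of_set {1..n}" "p2 \<in> permutations_of_set {1..n}"
    "p3 \<in> permutations_of_set {1..n}" and p4: "p4 = perm_list n (Delta (n - 1))"
    using ps ps4 by (auto simp: normal_perm_seqs_def)
  have C: "left_descents n p2 \<subseteq> right_descents n p1" "left_descents n p3 \<subseteq> right_descents n p2"
    "left_descents n p4 \<subseteq> right_descents n p3"
  proof -
    have H: "\<forall>k. Suc k < 4 \<longrightarrow> left_descents n (ps ! Suc k) \<subseteq> right_descents n (ps ! k)"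
      using ps by (simp add: normal_perm_seqs_def)
    show "left_descents n p2 \<subseteq> right_descents n p1" using H[rule_format, of 0] ps4 by simp
    show "left_descents n p3 \<subseteq> right_descents n p2" using H[rule_format, of 1] ps4 by simp
    show "left_descents n p4 \<subseteq> right_descents n p3" using H[rule_format, of 2] ps4 by simp
  qed
  have "{1..<n} - {n - 1} \<subseteq> right_descents n p3"
    using C(3) p4 left_descents_Delta_pred[OF n] by simp
  then obtain A3 where A3: "A3 \<subseteq> {1..n}" "card A3 = n - 1" "p3 = two_runs n A3"
    by (rule two_runs_of_right_descents[OF P(3) diff_le_self])
  have "card ({1..n} - A3) = 1" using A3 n by (simp add: card_Diff_subset finite_subset_interval)
  then obtain j where "{1..n} - A3 = {j}" by (auto simp: card_1_singleton_iff)
  then have j: "j \<in> {1..n}" "A3 = {1..n} - {j}" using A3(1) by auto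
  have "{1..<n} - {j - 1} \<subseteq> left_descents n p3"
    unfolding A3(3) left_descents_two_runs[OF A3(1)] using j(2) by auto
  then have "{1..<n} - {j - 1} \<subseteq> right_descents n p2" using C(2) by blast
  moreover have "j - 1 \<le> n" using j(1) by auto
  ultimately obtain A where A: "A \<subseteq> {1..n}" "card A = j - 1" "p2 = two_runs n A"
    using two_runs_of_right_descents[OF P(2)] by metis
  have "(A, p1) \<in> descent_pairs n"
    using A j P(1) C(1) by (auto simp: descent_pairs_def left_descents_two_runs right_descents_def)
  moreover have "ps = seq_of_pair n (A, p1)" using ps4 A A3 j p4 by (simp add: seq_of_pair_def)
  ultimately show ?thesis using that by blast
qed

lemma inj_on_seq_of_pair: "inj_on (seq_of_pair n) (descent_pairs n)"
proof (rule inj_onI)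
  fix p q assume p: "p \<in> descent_pairs n" and q: "q \<in> descent_pairs n" and e: "seq_of_pair n p = seq_of_pair n q"
  obtain A w A' w' where pq: "p = (A, w)" "q = (A', w')" by (cases p, cases q)
  have A: "A \<subseteq> {1..n}" "A \<noteq> {1..n}" "A' \<subseteq> {1..n}" "A' \<noteq> {1..n}"
    using p q pq by (auto simp: descent_pairs_def)
  have e': "w = w'" "two_runs n A = two_runs n A'"
    "two_runs n ({1..n} - {Suc (card A)}) = two_runs n ({1..n} - {Suc (card A')})"
    using e pq by (auto simp: seq_of_pair_def)
  have j: "Suc (card A) \<in> {1..n}" "Suc (card A') \<in> {1..n}"
    using card_less_of_psubset[OF A(1,2)] card_less_of_psubset[OF A(3,4)] by auto
  have "Suc (card A) = Suc (card A')"
    using arg_cong[OF e'(3), of last] unfolding last_two_runs[OF j(1)] last_two_runs[OF j(2)] .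
  then show "p = q" using two_runs_inj[OF A(1,3)] e' pq by simp
qed

lemma card_normal_perm_seqs_Delta_pred:
  assumes "n \<ge> 1"
  shows "card (normal_perm_seqs n 4 (perm_list n (Delta (n - 1)))) = card (descent_pairs n)"
proof -
  have "seq_of_pair n ` descent_pairs n = normal_perm_seqs n 4 (perm_list n (Delta (n - 1)))"
  proof (intro equalityI subsetI)
    fix ps assume "ps \<in> seq_of_pair n ` descent_pairs n"
    then show "ps \<in> normal_perm_seqs n 4 (perm_list n (Delta (n - 1)))"
      using seq_of_pair_normal[OF assms] by auto
  next
    fix ps assume "ps \<in> normal_perm_seqs n 4 (perm_list n (Delta (n - 1)))"
    then obtain A w where "(A, w) \<in> descent_pairs n" "ps = seq_of_pair n (A, w)"
      by (rule normal_perm_seq_Delta_pred_cases[OF assms])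
    then show "ps \<in> seq_of_pair n ` descent_pairs n" by blast
  qed
  then show ?thesis using card_image[OF inj_on_seq_of_pair, of n] by simp
qed

text \<open>Encoding \<open>A\<close> by its indicator word turns the condition on descent pairs into compatibility.\<close>
definition indicator_list :: "nat \<Rightarrow> nat set \<Rightarrow> bool list" where
  "indicator_list n A = map (\<lambda>k. k \<in> A) [1..<Suc n]"

lemma length_indicator_list [simp]: "length (indicator_list n A) = n"
  by (simp add: indicator_list_def)

lemma nth_indicator_list: "i < n \<Longrightarrow> indicator_list n A ! i = (Suc i \<in> A)"
  by (simp add: indicator_list_def nth_upt del: upt_Suc)

lemma compatible_indicator_list:
  assumes "length w = n"
  shows "compatible (indicator_list n A) w \<longleftrightarrow> (\<forall>k\<in>{1..<n}. (k \<in> A \<and> Suc k \<notin> A) \<or> w ! k < w ! (k - 1))"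
proof -
  have "compatible (indicator_list n A) w \<longleftrightarrow>
      (\<forall>i. Suc i < n \<longrightarrow> (Suc i \<in> A \<and> Suc (Suc i) \<notin> A) \<or> w ! Suc i < w ! i)"
    using assms by (simp add: compatible_nth nth_indicator_list)
  also have "\<dots> \<longleftrightarrow> (\<forall>k\<in>{1..<n}. (k \<in> A \<and> Suc k \<notin> A) \<or> w ! k < w ! (k - 1))"
    by (metis (no_types, lifting) One_nat_def Suc_le_eq Suc_pred atLeastLessThan_iff diff_Suc_1 zero_less_Suc)
  finally show ?thesis .
qed

lemma indicator_list_inj:
  assumes "A \<subseteq> {1..n}" "A' \<subseteq> {1..n}" "indicator_list n A = indicator_list n A'"
  shows "A = A'"
proof -
  have "k \<in> A \<longleftrightarrow> k \<in> A'" if "k \<in> {1..n}" for k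
    using that assms(3) nth_indicator_list[of "k - 1" n] by (metis Suc_pred' atLeastAtMost_iff
        diff_less le_less_trans less_one not_le zero_less_one)
  then show ?thesis using assms(1,2) by blast
qed

lemma indicator_list_eq_replicate_True:
  "A \<subseteq> {1..n} \<Longrightarrow> indicator_list n A = replicate n True \<longleftrightarrow> A = {1..n}"
proof -
  have "indicator_list n A = replicate n True \<longleftrightarrow> (\<forall>i<n. Suc i \<in> A)"
    by (simp add: list_eq_iff_nth_eq nth_indicator_list)
  also have "\<dots> \<longleftrightarrow> {1..n} \<subseteq> A"
  proof
    assume "\<forall>i<n. Suc i \<in> A"
    then show "{1..n} \<subseteq> A"
      by (metis Suc_pred' atLeastAtMost_iff diff_less le_less_trans subsetI zero_less_one less_le_trans not_le)
  qed auto
  finally show "A \<subseteq> {1..n} \<Longrightarrow> ?thesis" by blast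
qed

lemma card_descent_pairs:
  "card (descent_pairs n) = card (marked_arrs {1..n} - {(replicate n True, desc_list {1..n})})"
proof -
  let ?H = "\<lambda>(A, w). (indicator_list n A, w)"
  have "?H ` descent_pairs n = marked_arrs {1..n} - {(replicate n True, desc_list {1..n})}"
  proof (intro equalityI subsetI)
    fix z assume "z \<in> ?H ` descent_pairs n"
    then obtain A w where Aw: "(A, w) \<in> descent_pairs n" "z = (indicator_list n A, w)" by auto
    then show "z \<in> marked_arrs {1..n} - {(replicate n True, desc_list {1..n})}"
      using compatible_indicator_list[of w n A] length_perm[of w n] indicator_list_eq_replicate_True[of A n]
      by (auto simp: descent_pairs_def marked_arrs_def)
  next
    fix z assume z: "z \<in> marked_arrs {1..n} - {(replicate n True, desc_list {1..n})}"
    then obtain x w where zxw: "z = (x, w)" "length x = length w" "w \<in> permutations_of_set {1..n}"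
      "compatible x w" by (auto simp: marked_arrs_def)
    have len: "length w = n" "length x = n" using length_perm[OF zxw(3)] zxw(2) by simp_all
    define A where "A = {k \<in> {1..n}. x ! (k - 1)}"
    have xA: "indicator_list n A = x"
      by (rule nth_equalityI) (use len in \<open>auto simp: nth_indicator_list A_def\<close>)
    have "A \<noteq> {1..n}"
    proof
      assume "A = {1..n}"
      then have "x = replicate n True" using xA indicator_list_eq_replicate_True[of A n] by simp
      then have "sorted_wrt (>) w" using compatible_if_sorted zxw by (metis sorted_replicate)
      then have "w = desc_list {1..n}" using desc_list_set zxw(3) by (metis permutations_of_setD(1))
      then show False using z zxw \<open>x = replicate n True\<close> by simp
    qed
    then have "(A, w) \<in> descent_pairs n"
      using zxw xA compatible_indicator_list[OF len(1), of A] by (auto simp: descent_pairs_def A_def)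
    then show "z \<in> ?H ` descent_pairs n" using zxw xA by force
  qed
  moreover have "inj_on ?H (descent_pairs n)"
  proof (rule inj_onI)
    fix p q assume "p \<in> descent_pairs n" "q \<in> descent_pairs n" and e: "?H p = ?H q"
    moreover obtain A w A' w' where "p = (A, w)" "q = (A', w')" by (cases p, cases q)
    ultimately show "p = q" using indicator_list_inj[of A n A'] by (simp add: descent_pairs_def)
  qed
  ultimately show ?thesis by (metis card_image)
qed

lemma card_marked_arrs_Diff:
  "card (marked_arrs {1..n} - {(replicate n True, desc_list {1..n})}) = subset_arrangements n - 1"
proof -
  have "compatible (replicate n True) (desc_list {1..n})"
    using compatible_if_sorted[of "replicate n True" "desc_list {1..n}"] desc_list_props[of "{1..n}"] by simp
  then have "(replicate n True, desc_list {1..n}) \<in> marked_arrs {1..n}"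
    using desc_list_perm[of "{1..n}"] desc_list_props(3)[of "{1..n}"] by (simp add: marked_arrs_def)
  then show ?thesis using card_marked_arrs[of "{1..n}"] by (simp add: card_Diff_singleton)
qed

theorem corollary4p7:
  fixes u :: "nat \<Rightarrow> nat"
  assumes "u 1 = 1"
    and "\<And>n. n \<ge> 2 \<Longrightarrow> u n = n * u (n - 1) + n"
  shows "\<forall>n \<ge> 1. b n 4 (cls n (Delta (n - 1))) = u n"
proof (intro allI impI)
  fix n :: nat assume n: "n \<ge> 1"
  have "reduced n (Delta (n - 1))" by (simp add: reduced_Delta)
  then have "cls n (Delta (n - 1)) \<in> simples n" by (auto simp: simples_iff_reduced)
  then have "b n 4 (cls n (Delta (n - 1))) = card (normal_perm_seqs n 4 (perm_list n (Delta (n - 1))))"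
    using b_eq_card_normal_perm_seqs simple_perm_cls[OF Delta_words] by simp
  also have "\<dots> = card (descent_pairs n)" by (rule card_normal_perm_seqs_Delta_pred[OF n])
  also have "\<dots> = subset_arrangements n - 1" using card_descent_pairs card_marked_arrs_Diff by simp
  also have "\<dots> = u n" using eq_subset_arrangements_minus_one[OF assms n] by simp
  finally show "b n 4 (cls n (Delta (n - 1))) = u n" .
qed

end
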